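(* Consider the distributed detection model described in the context with no channel state information at the sensors, i.e. sensor gains $\boldsymbol{\alpha}=\sqrt{P/L}\,\mathbf{1}_L$, and Ricean channels with parameter $K\ge 0$. If the channels are zero-mean ($K=0$), then for every number of antennas $N\ge 1$ the error exponent $\mathcal{E}_{\rm NoCSIS}(N,0)$ equals zero, so the conditional error probability $P_{e|\mathbf{H}}(N)$ does not decrease exponentially in $L$ for any $N$. Moreover, the antenna gain $G_{\rm NoCSIS}(N,K):=\mathcal{E}_{\rm NoCSIS}(N,K)/\mathcal{E}_{\rm NoCSIS}(1,K)$ (defined for $K>0$) satisfies $\lim_{K\to 0}G_{\rm NoCSIS}(N,K)=N$.
   Context: Model: $L$ sensors observe $\Theta\in\{0,\theta\}$, $\theta>0$, with $\Theta=\theta$ (hypothesis $H_1$) having prior probability $p_1\in(0,1)$ and $\Theta=0$ ($H_0$) probability $p_0=1-p_1$. Sensor $l$ observes $x_l=\Theta+\eta_l$, where $\eta_l\sim\mathcal{CN}(0,\sigma_\eta^2)$ i.i.d., multiplies it by a complex gain $\alpha_l$ and transmits over a multiple-access channel to a fusion center (FC) with $N$ antennas. The received vector is $\mathbf{y}=\mathbf{H}\boldsymbol{\alpha}\Theta+\mathbf{H}\mathbf{D}(\boldsymbol{\alpha})\boldsymbol{\eta}+\boldsymbol{\nu}$, where $\mathbf{H}$ is the $N\times L$ channel matrix with i.i.d. entries $h_{nl}=\sqrt{K/(K+1)}+\frac{1}{\sqrt{K+1}}h^{\rm diff}_{nl}$, the $h^{\rm diff}_{nl}$ being i.i.d. zero-mean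 with $E|h^{\rm diff}_{nl}|^2=1$ (so $E|h_{nl}|^2=1$), $K\ge0$ is the Ricean (line-of-sight) parameter, $\mathbf{D}(\boldsymbol{\alpha})=\mathrm{diag}(\alpha_1,\dots,\alpha_L)$, $\boldsymbol{\eta}=(\eta_l)$, and $\boldsymbol{\nu}\sim\mathcal{CN}(\mathbf{0},\sigma_\nu^2\mathbf{I}_N)$ independent of $\boldsymbol\eta$. Let $\mathbf{R}(\boldsymbol{\alpha})=\sigma_\eta^2\mathbf{H}\mathbf{D}(\boldsymbol{\alpha})\mathbf{D}(\boldsymbol{\alpha})^H\mathbf{H}^H+\sigma_\nu^2\mathbf{I}_N$. The gains satisfy the power constraint $\sum_l|\alpha_l|^2\le P:=P_T/(p_1\theta^2+\sigma_\eta^2)$, where $P_T>0$ is the total average transmit power. The FC knows $\mathbf{H},\boldsymbol\alpha$ and uses the Bayesian optimal (likelihood ratio) test, whose conditional error probability is $P_{e|\mathbf{H}}(N)=p_0Q(\omega+\tau/\omega)+p_1Q(\omega-\tau/\omega)$ with $\omega=\theta\sqrt{\boldsymbol\alpha^H\mathbf{H}^H\mathbf{R}(\boldsymbol\alpha)^{-1}\mathbf{H}\boldsymbol\alpha/2}$, $\tau=\frac12\ln(p_0/p_1)$, and $Q$ the Gaussian tail function. The error exponent is $\mathcal{E}(N)=\lim_{L\to\infty}-\frac1L\log P_{e|\mathbf{H}}(N)$ (limit in probability), which equals $\lim_{L\to\infty}\frac{\theta^2}{8}\frac1L\boldsymbol\alpha^H\mathbf{H}^H\mathbf{R}(\boldsymbol\alpha)^{-1}\mathbf{H}\boldsymbol\alpha$.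 $\mathcal{E}_{\rm NoCSIS}(N,K)$ denotes this error exponent when $\boldsymbol\alpha=\sqrt{P/L}\,\mathbf{1}_L$ and the channels have Ricean parameter $K$. *)

theory Defs
  imports "HOL-Probability.Probability" "Jordan_Normal_Form.Gauss_Jordan_Elimination"
begin

definition ctrans :: "complex mat \<Rightarrow> complex mat" where
  "ctrans A = mat (dim_col A) (dim_row A) (\<lambda>(i,j). cnj (A $$ (j,i)))"

definition Dmat :: "complex vec \<Rightarrow> complex mat" where
  "Dmat a = mat (dim_vec a) (dim_vec a) (\<lambda>(i,j). if i = j then a $ i else 0)"

definition ricean :: "real \<Rightarrow> complex \<Rightarrow> complex" where
  "ricean K hdf = complex_of_real (sqrt (K / (K + 1))) + complex_of_real (1 / sqrt (K + 1)) * hdf"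

definition Hmat :: "nat \<Rightarrow> nat \<Rightarrow> real \<Rightarrow> (nat \<Rightarrow> nat \<Rightarrow> complex) \<Rightarrow> complex mat" where
  "Hmat N L K hdf = mat N L (\<lambda>(n,l). ricean K (hdf n l))"

definition Rmat :: "real \<Rightarrow> real \<Rightarrow> complex mat \<Rightarrow> complex vec \<Rightarrow> complex mat" where
  "Rmat s_eta2 s_nu2 H a =
     complex_of_real s_eta2 \<cdot>\<^sub>m (H * Dmat a * ctrans (Dmat a) * ctrans H)
     + complex_of_real s_nu2 \<cdot>\<^sub>m 1\<^sub>m (dim_row H)"

(* alpha^H H^H R(alpha)^{-1} H alpha  (a real number, since R is Hermitian positive definite) *)
definition quad_stat :: "real \<Rightarrow> real \<Rightarrow> complex mat \<Rightarrow> complex vec \<Rightarrow> real" where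
  "quad_stat s_eta2 s_nu2 H a =
     (let v = H *\<^sub>v a; Rinv = the (mat_inverse (Rmat s_eta2 s_nu2 H a))
      in Re (conjugate v \<bullet> (Rinv *\<^sub>v v)))"

(* the finite-L quantity whose limit (in probability) is the error exponent:
   theta^2/8 * (1/L) * alpha^H H^H R^{-1} H alpha *)
definition exp_stat :: "real \<Rightarrow> real \<Rightarrow> real \<Rightarrow> nat \<Rightarrow> complex mat \<Rightarrow> complex vec \<Rightarrow> real" where
  "exp_stat \<theta> s_eta2 s_nu2 L H a = \<theta>\<^sup>2 / 8 * (1 / real L) * quad_stat s_eta2 s_nu2 H a"

definition alpha_nocsis :: "real \<Rightarrow> nat \<Rightarrow> complex vec" where
  "alpha_nocsis P L = vec L (\<lambda>_. complex_of_real (sqrt (P / real L)))"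

definition conv_in_prob :: "'a measure \<Rightarrow> (nat \<Rightarrow> 'a \<Rightarrow> real) \<Rightarrow> real \<Rightarrow> bool" where
  "conv_in_prob M X c \<longleftrightarrow>
     (\<forall>\<epsilon>>0. ((\<lambda>L. measure M {\<omega> \<in> space M. \<bar>X L \<omega> - c\<bar> > \<epsilon>}) \<longlongrightarrow> 0) sequentially)"

end

theory Submission
  imports Defs "Jordan_Normal_Form.Determinant"
begin

unbundle no vec_syntax

text \<open>With \<open>\<alpha> = \<surd>(P/L) \<one>\<close>, the statistic \<open>(1/L) \<alpha>\<^sup>H H\<^sup>H R\<^sup>-\<^sup>1 H \<alpha>\<close> equals
  \<open>Re \<langle>u, R\<^sub>L\<^sup>-\<^sup>1 u\<rangle>\<close> with \<open>u\<^sub>n = \<surd>P (1/L) \<Sum>\<^sub>l h\<^sub>n\<^sub>l\<close> and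
  \<open>R\<^sub>L = \<sigma>\<^sub>\<eta>\<^sup>2 P (1/L) H H\<^sup>H + \<sigma>\<^sub>\<nu>\<^sup>2 I\<close>. By the weak law of large numbers, \<open>u \<rightarrow> \<surd>P m \<one>\<close>
  and \<open>R\<^sub>L \<rightarrow> \<sigma>\<^sub>\<eta>\<^sup>2 P (m\<^sup>2 J + c\<^sup>2 I) + \<sigma>\<^sub>\<nu>\<^sup>2 I\<close> in probability, where \<open>m\<^sup>2 = K/(K+1)\<close> and
  \<open>c\<^sup>2 = 1/(K+1)\<close> are the line-of-sight and diffuse powers. Because \<open>R\<^sub>L \<ge> \<sigma>\<^sub>\<nu>\<^sup>2 I\<close>
  uniformly in \<open>L\<close>, the quadratic form is continuous at this limit; evaluating it on the
  all-ones eigenvector of \<open>J\<close> gives the exponent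
  \<open>\<theta>\<^sup>2/8 \<cdot> P K N / (\<sigma>\<^sub>\<eta>\<^sup>2 P (K N + 1) + \<sigma>\<^sub>\<nu>\<^sup>2 (K + 1))\<close>, which vanishes at \<open>K = 0\<close> and whose
  ratio to its value at \<open>N = 1\<close> tends to \<open>N\<close> as \<open>K \<rightarrow> 0\<close>.
  Only second moments of the channel are assumed, so the law of large numbers for the
  diagonal entries \<open>(1/L) \<Sum>\<^sub>l |h\<^sub>n\<^sub>l|\<^sup>2\<close> is obtained by truncation: truncated means control the
  lower tail, and having mean one lets the lower tail control the upper one.\<close>

section \<open>Entries of the matrices of the model\<close>

lemma Hmat_dims [simp]: "dim_row (Hmat N L K f) = N" "dim_col (Hmat N L K f) = L"
  by (simp_all add: Hmat_def)

lemma Hmat_index [simp]: "n < N \<Longrightarrow> l < L \<Longrightarrow> Hmat N L K f $$ (n,l) = ricean K (f n l)"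
  by (simp add: Hmat_def)

lemma alpha_nocsis_dim [simp]: "dim_vec (alpha_nocsis P L) = L"
  by (simp add: alpha_nocsis_def)

lemma alpha_nocsis_index [simp]:
  "l < L \<Longrightarrow> alpha_nocsis P L $ l = complex_of_real (sqrt (P / real L))"
  by (simp add: alpha_nocsis_def)

lemma Dmat_dims [simp]: "dim_row (Dmat a) = dim_vec a" "dim_col (Dmat a) = dim_vec a"
  by (simp_all add: Dmat_def)

lemma Dmat_index [simp]:
  "i < dim_vec a \<Longrightarrow> j < dim_vec a \<Longrightarrow> Dmat a $$ (i,j) = (if i = j then a $ i else 0)"
  by (simp add: Dmat_def)

lemma ctrans_dims [simp]: "dim_row (ctrans A) = dim_col A" "dim_col (ctrans A) = dim_row A"
  by (simp_all add: ctrans_def)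

lemma ctrans_index [simp]:
  "i < dim_col A \<Longrightarrow> j < dim_row A \<Longrightarrow> ctrans A $$ (i,j) = cnj (A $$ (j,i))"
  by (simp add: ctrans_def)

lemma index_mult_mat_sum:
  "i < dim_row A \<Longrightarrow> j < dim_col B \<Longrightarrow> dim_col A = dim_row B \<Longrightarrow>
    (A * B) $$ (i,j) = (\<Sum>k\<in>{0..<dim_col A}. A $$ (i,k) * B $$ (k,j))"
  by (simp add: scalar_prod_def)

lemma index_mult_mat_vec_sum:
  "i < dim_row A \<Longrightarrow> dim_col A = dim_vec v \<Longrightarrow>
    (A *\<^sub>v v) $ i = (\<Sum>j\<in>{0..<dim_vec v}. A $$ (i,j) * v $ j)"
  by (simp add: scalar_prod_def)

lemma index_mult_Dmat:
  assumes "n < dim_row H" "l < dim_col H" "dim_vec a = dim_col H"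
  shows "(H * Dmat a) $$ (n,l) = H $$ (n,l) * a $ l"
proof -
  have "(H * Dmat a) $$ (n,l) = (\<Sum>j\<in>{0..<dim_col H}. H $$ (n,j) * (if j = l then a $ l else 0))"
    using assms by (subst index_mult_mat_sum) (auto intro!: sum.cong)
  also have "\<dots> = H $$ (n,l) * a $ l"
    using assms by (simp add: if_distrib cong: if_cong)
  finally show ?thesis .
qed

lemma index_mult_Dmat_ctrans_Dmat:
  assumes "n < dim_row H" "l < dim_col H" "dim_vec a = dim_col H"
  shows "(H * Dmat a * ctrans (Dmat a)) $$ (n,l) = H $$ (n,l) * a $ l * cnj (a $ l)"
proof -
  have "(H * Dmat a * ctrans (Dmat a)) $$ (n,l)
      = (\<Sum>j\<in>{0..<dim_col H}. (H $$ (n,j) * a $ j) * (if l = j then cnj (a $ l) else 0))"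
    using assms
    by (subst index_mult_mat_sum) (auto intro!: sum.cong simp del: index_mult_mat(1) simp add: index_mult_Dmat)
  also have "\<dots> = H $$ (n,l) * a $ l * cnj (a $ l)"
    using assms by (simp add: if_distrib cong: if_cong)
  finally show ?thesis .
qed

lemma Rmat_carrier: "Rmat s1 s2 H a \<in> carrier_mat (dim_row H) (dim_row H)"
  unfolding Rmat_def carrier_mat_def by simp

lemma Rmat_index:
  assumes "n < dim_row H" "n' < dim_row H" "dim_vec a = dim_col H"
  shows "Rmat s1 s2 H a $$ (n,n') =
    complex_of_real s1 * (\<Sum>l\<in>{0..<dim_col H}. H $$ (n,l) * a $ l * cnj (a $ l) * cnj (H $$ (n',l)))
    + (if n = n' then complex_of_real s2 else 0)"
proof -
  have "(H * Dmat a * ctrans (Dmat a) * ctrans H) $$ (n,n')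
      = (\<Sum>l\<in>{0..<dim_col H}. H $$ (n,l) * a $ l * cnj (a $ l) * cnj (H $$ (n',l)))"
    using assms
    by (subst index_mult_mat_sum)
      (auto intro!: sum.cong simp del: index_mult_mat(1) simp add: index_mult_Dmat_ctrans_Dmat)
  then show ?thesis
    using assms by (simp add: Rmat_def)
qed

text \<open>The entries of \<open>R(\<alpha>)\<close> when every gain has squared modulus \<open>c\<close>.\<close>

definition cov_entry ::
  "real \<Rightarrow> real \<Rightarrow> real \<Rightarrow> nat \<Rightarrow> (nat \<Rightarrow> nat \<Rightarrow> complex) \<Rightarrow> nat \<Rightarrow> nat \<Rightarrow> complex" where
  "cov_entry s1 s2 c L h n j =
     complex_of_real s1 * (complex_of_real c * (\<Sum>l\<in>{0..<L}. h n l * cnj (h j l)))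
     + (if n = j then complex_of_real s2 else 0)"

lemma Rmat_nocsis_index:
  assumes "P \<ge> 0" "n < N" "j < N"
  shows "Rmat s1 s2 (Hmat N L K f) (alpha_nocsis P L) $$ (n,j)
    = cov_entry s1 s2 (P / L) L (\<lambda>n l. ricean K (f n l)) n j"
proof -
  let ?H = "Hmat N L K f" and ?a = "alpha_nocsis P L" and ?h = "\<lambda>n l. ricean K (f n l)"
  have gain: "?a $ l * cnj (?a $ l) = complex_of_real (P / L)" if "l < L" for l
  proof -
    have "?a $ l * cnj (?a $ l) = complex_of_real (sqrt (P / L) * sqrt (P / L))"
      using that by (simp only: alpha_nocsis_index complex_cnj_complex_of_real of_real_mult)
    then show ?thesis
      using assms(1) by simp
  qed
  have "(\<Sum>l\<in>{0..<L}. ?H $$ (n,l) * ?a $ l * cnj (?a $ l) * cnj (?H $$ (j,l)))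
      = (\<Sum>l\<in>{0..<L}. complex_of_real (P / L) * (?h n l * cnj (?h j l)))"
  proof (intro sum.cong refl)
    fix l assume "l \<in> {0..<L}"
    then show "?H $$ (n,l) * ?a $ l * cnj (?a $ l) * cnj (?H $$ (j,l))
        = complex_of_real (P / L) * (?h n l * cnj (?h j l))"
    proof -
      from \<open>l \<in> {0..<L}\<close> have l: "l < L"
        by simp
      have "?H $$ (n,l) * ?a $ l * cnj (?a $ l) * cnj (?H $$ (j,l))
          = ?H $$ (n,l) * (?a $ l * cnj (?a $ l)) * cnj (?H $$ (j,l))"
        by (simp only: mult.assoc)
      also have "\<dots> = ?H $$ (n,l) * complex_of_real (P / L) * cnj (?H $$ (j,l))"
        by (simp only: gain[OF l])
      finally show ?thesis
        using l assms(2,3) by (simp add: mult_ac)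
    qed
  qed
  then show ?thesis
    using assms(2,3) by (simp add: Rmat_index cov_entry_def sum_distrib_left)
qed

lemma cov_entry_coercive:
  assumes "s1 \<ge> 0" "c \<ge> 0"
  shows "s2 * (\<Sum>n\<in>{0..<N}. (cmod (y n))\<^sup>2)
    \<le> Re (\<Sum>n\<in>{0..<N}. cnj (y n) * (\<Sum>j\<in>{0..<N}. cov_entry s1 s2 c L h n j * y j))"
proof -
  define g where "g l = (\<Sum>n\<in>{0..<N}. cnj (y n) * h n l)" for l
  have pointwise: "cnj (y n) * (cov_entry s1 s2 c L h n j * y j)
      = complex_of_real (s1 * c) * (\<Sum>l\<in>{0..<L}. cnj (y n) * h n l * (cnj (h j l) * y j))
        + (if n = j then complex_of_real s2 * (cnj (y n) * y n) else 0)" for n j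
    by (cases "n = j") (simp_all add: cov_entry_def algebra_simps sum_distrib_left sum_distrib_right)
  have "(\<Sum>n\<in>{0..<N}. cnj (y n) * (\<Sum>j\<in>{0..<N}. cov_entry s1 s2 c L h n j * y j))
      = complex_of_real (s1 * c)
          * (\<Sum>n\<in>{0..<N}. \<Sum>j\<in>{0..<N}. \<Sum>l\<in>{0..<L}. cnj (y n) * h n l * (cnj (h j l) * y j))
        + complex_of_real s2 * (\<Sum>n\<in>{0..<N}. cnj (y n) * y n)"
    by (simp add: sum_distrib_left pointwise sum.distrib)
  also have "(\<Sum>n\<in>{0..<N}. \<Sum>j\<in>{0..<N}. \<Sum>l\<in>{0..<L}. cnj (y n) * h n l * (cnj (h j l) * y j))
      = (\<Sum>l\<in>{0..<L}. g l * cnj (g l))"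
    unfolding g_def
    by (simp add: sum_distrib_left sum_distrib_right cnj_sum mult.commute sum.swap[of _ "{0..<L}"])
  finally have quadratic_form: "(\<Sum>n\<in>{0..<N}. cnj (y n) * (\<Sum>j\<in>{0..<N}. cov_entry s1 s2 c L h n j * y j))
      = complex_of_real (s1 * c) * (\<Sum>l\<in>{0..<L}. g l * cnj (g l))
        + complex_of_real s2 * (\<Sum>n\<in>{0..<N}. cnj (y n) * y n)" .
  have "Re (\<Sum>l\<in>{0..<L}. g l * cnj (g l)) \<ge> 0"
    by (simp add: Re_sum sum_nonneg)
  moreover have "Re (\<Sum>n\<in>{0..<N}. cnj (y n) * y n) = (\<Sum>n\<in>{0..<N}. (cmod (y n))\<^sup>2)"
    by (simp add: Re_sum mult.commute[of "cnj _"] complex_norm_square[symmetric] del: of_real_power)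
  ultimately show ?thesis
    unfolding quadratic_form using assms by simp
qed

lemma mat_inverse_exists_if_injective:
  fixes A :: "'a :: field mat"
  assumes A: "A \<in> carrier_mat N N"
    and inj: "\<And>x. x \<in> carrier_vec N \<Longrightarrow> A *\<^sub>v x = 0\<^sub>v N \<Longrightarrow> x = 0\<^sub>v N"
  obtains B where "mat_inverse A = Some B"
proof (cases "mat_inverse A")
  case None
  have "Determinant.det A \<noteq> 0"
    using det_0_iff_vec_prod_zero[OF A] inj by auto
  then have "A \<in> Units (ring_mat TYPE('a) N ())"
    by (rule det_non_zero_imp_unit[OF A])
  with mat_inverse(1)[OF A None, where b = "()"] show ?thesis
    by blast
qed (rule that)

lemma quad_stat_eq_solution:
  assumes B: "mat_inverse (Rmat s1 s2 H a) = Some B"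
  defines "v \<equiv> H *\<^sub>v a"
  shows "Rmat s1 s2 H a *\<^sub>v (B *\<^sub>v v) = v"
    and "quad_stat s1 s2 H a = Re (\<Sum>n\<in>{0..<dim_row H}. cnj (v $ n) * (B *\<^sub>v v) $ n)"
proof -
  have R: "Rmat s1 s2 H a \<in> carrier_mat (dim_row H) (dim_row H)"
    by (rule Rmat_carrier)
  have RB: "Rmat s1 s2 H a * B = 1\<^sub>m (dim_row H)" and Bc: "B \<in> carrier_mat (dim_row H) (dim_row H)"
    using mat_inverse(2)[OF R B] by blast+
  have v: "v \<in> carrier_vec (dim_row H)"
    unfolding v_def carrier_vec_def by simp
  have Bv: "B *\<^sub>v v \<in> carrier_vec (dim_row H)"
    using Bc v by simp
  have "Rmat s1 s2 H a *\<^sub>v (B *\<^sub>v v) = (Rmat s1 s2 H a * B) *\<^sub>v v"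
    by (rule assoc_mult_mat_vec[symmetric, OF R Bc v])
  also have "\<dots> = v"
    unfolding RB by (rule one_mult_mat_vec[OF v])
  finally show "Rmat s1 s2 H a *\<^sub>v (B *\<^sub>v v) = v" .
  have "quad_stat s1 s2 H a = Re (conjugate v \<bullet> (B *\<^sub>v v))"
    unfolding quad_stat_def Let_def B v_def[symmetric] option.sel ..
  also have "conjugate v \<bullet> (B *\<^sub>v v) = (\<Sum>n\<in>{0..<dim_row H}. cnj (v $ n) * (B *\<^sub>v v) $ n)"
    unfolding scalar_prod_def using Bv v Bc by (intro sum.cong) auto
  finally show "quad_stat s1 s2 H a = Re (\<Sum>n\<in>{0..<dim_row H}. cnj (v $ n) * (B *\<^sub>v v) $ n)" .
qed

lemma mult_Rmat_nocsis_vec_index: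
  assumes "P \<ge> 0" "n < N" "x \<in> carrier_vec N"
  shows "(Rmat s1 s2 (Hmat N L K f) (alpha_nocsis P L) *\<^sub>v x) $ n
    = (\<Sum>j\<in>{0..<N}. cov_entry s1 s2 (P / L) L (\<lambda>n l. ricean K (f n l)) n j * x $ j)"
  using assms Rmat_carrier[of s1 s2 "Hmat N L K f" "alpha_nocsis P L"]
  by (subst index_mult_mat_vec_sum) (auto intro!: sum.cong simp: Rmat_nocsis_index)

lemma Rmat_nocsis_invertible:
  assumes P: "P \<ge> 0" and s1: "s1 \<ge> 0" and s2: "s2 > 0"
  obtains B where "mat_inverse (Rmat s1 s2 (Hmat N L K f) (alpha_nocsis P L)) = Some B"
proof (rule mat_inverse_exists_if_injective)
  show "Rmat s1 s2 (Hmat N L K f) (alpha_nocsis P L) \<in> carrier_mat N N"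
    using Rmat_carrier[of s1 s2 "Hmat N L K f" "alpha_nocsis P L"] by simp
  fix x :: "complex vec"
  assume x: "x \<in> carrier_vec N" "Rmat s1 s2 (Hmat N L K f) (alpha_nocsis P L) *\<^sub>v x = 0\<^sub>v N"
  have "s2 * (\<Sum>n\<in>{0..<N}. (cmod (x $ n))\<^sup>2)
      \<le> Re (\<Sum>n\<in>{0..<N}. cnj (x $ n) * (\<Sum>j\<in>{0..<N}. cov_entry s1 s2 (P / L) L (\<lambda>n l. ricean K (f n l)) n j * x $ j))"
    using s1 P by (intro cov_entry_coercive) auto
  also have "\<dots> = 0"
    using mult_Rmat_nocsis_vec_index[of P _ N x s1 s2 L K f, OF P _ x(1)] x(2)
    by simp
  finally have "(\<Sum>n\<in>{0..<N}. (cmod (x $ n))\<^sup>2) = 0"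
    using s2 by (simp add: mult_le_0_iff sum_nonneg order.antisym)
  then show "x = 0\<^sub>v N"
    using x(1) by (intro eq_vecI) (auto simp: sum_nonneg_eq_0_iff)
qed

lemma Hmat_mult_alpha_nocsis_index:
  "n < N \<Longrightarrow> (Hmat N L K f *\<^sub>v alpha_nocsis P L) $ n
    = complex_of_real (sqrt (P / L)) * (\<Sum>l\<in>{0..<L}. ricean K (f n l))"
  by (subst index_mult_mat_vec_sum) (simp_all add: sum_distrib_left mult.commute)

text \<open>Rescaling by \<open>\<surd>L\<close> makes both the right-hand side \<open>u\<close> and the matrix of the system
  sample means over the sensors.\<close>

lemma quad_stat_nocsis_as_solution:
  fixes f :: "nat \<Rightarrow> nat \<Rightarrow> complex" and K :: real
  assumes L: "0 < L" and P: "P \<ge> 0" and s1: "s1 \<ge> 0" and s2: "s2 > 0"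
  defines "u \<equiv> \<lambda>n. complex_of_real (sqrt P / L) * (\<Sum>l\<in>{0..<L}. ricean K (f n l))"
  obtains Z where
    "\<And>n. n < N \<Longrightarrow> (\<Sum>j\<in>{0..<N}. cov_entry s1 s2 (P / L) L (\<lambda>n l. ricean K (f n l)) n j * Z j) = u n"
    "quad_stat s1 s2 (Hmat N L K f) (alpha_nocsis P L) / L = Re (\<Sum>n\<in>{0..<N}. cnj (u n) * Z n)"
proof -
  define R where "R = Rmat s1 s2 (Hmat N L K f) (alpha_nocsis P L)"
  define v where "v = Hmat N L K f *\<^sub>v alpha_nocsis P L"
  obtain B where B: "mat_inverse R = Some B"
    unfolding R_def using Rmat_nocsis_invertible[OF P s1 s2] .
  define z where "z = B *\<^sub>v v"
  have Rz: "R *\<^sub>v z = v"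
    unfolding R_def z_def v_def by (rule quad_stat_eq_solution(1)[OF B[unfolded R_def]])
  have quad: "quad_stat s1 s2 (Hmat N L K f) (alpha_nocsis P L) = Re (\<Sum>n\<in>{0..<N}. cnj (v $ n) * z $ n)"
    using quad_stat_eq_solution(2)[OF B[unfolded R_def]] by (simp add: v_def z_def)
  have z: "z \<in> carrier_vec N"
    using mat_inverse(2)[OF _ B] Rmat_carrier[of s1 s2 "Hmat N L K f" "alpha_nocsis P L"]
    unfolding z_def carrier_vec_def R_def by auto
  have sqrtL: "sqrt (real L) > 0" "complex_of_real (sqrt L) * complex_of_real (sqrt L) = L"
    using L by (simp_all flip: of_real_mult)
  have v_u: "v $ n = complex_of_real (sqrt L) * u n" if "n < N" for n
  proof -
    have "sqrt (P / L) = sqrt L * (sqrt P / L)"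
      using L by (simp add: real_sqrt_divide field_simps)
    then show ?thesis
      unfolding v_def u_def Hmat_mult_alpha_nocsis_index[OF that] by (simp add: mult.assoc)
  qed
  define Z where "Z n = z $ n / complex_of_real (sqrt L)" for n
  show thesis
  proof
    fix n assume n: "n < N"
    have "(\<Sum>j\<in>{0..<N}. cov_entry s1 s2 (P / L) L (\<lambda>n l. ricean K (f n l)) n j * Z j) = (R *\<^sub>v z) $ n / sqrt L"
      unfolding R_def using mult_Rmat_nocsis_vec_index[of P n N z s1 s2 L K f, OF P n z] by (simp add: Z_def sum_divide_distrib)
    then show "(\<Sum>j\<in>{0..<N}. cov_entry s1 s2 (P / L) L (\<lambda>n l. ricean K (f n l)) n j * Z j) = u n"
      using Rz v_u[OF n] sqrtL(1) by simp
  next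
    have "(\<Sum>n\<in>{0..<N}. cnj (v $ n) * z $ n) / L = (\<Sum>n\<in>{0..<N}. cnj (u n) * Z n)"
      unfolding sum_divide_distrib using v_u sqrtL by (intro sum.cong) (auto simp: Z_def field_simps)
    then show "quad_stat s1 s2 (Hmat N L K f) (alpha_nocsis P L) / L = Re (\<Sum>n\<in>{0..<N}. cnj (u n) * Z n)"
      using quad by (metis Re_divide_of_real of_real_of_nat_eq)
  qed
qed


section \<open>Perturbation of a coercive linear system\<close>

lemma cmod_sum_cnj_mult_le_L2_set:
  fixes u w :: "nat \<Rightarrow> complex"
  shows "cmod (\<Sum>n\<in>A. cnj (u n) * w n) \<le> L2_set (\<lambda>n. cmod (u n)) A * L2_set (\<lambda>n. cmod (w n)) A"
proof -
  have "cmod (\<Sum>n\<in>A. cnj (u n) * w n) \<le> (\<Sum>n\<in>A. \<bar>cmod (u n)\<bar> * \<bar>cmod (w n)\<bar>)"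
    using norm_sum[of "\<lambda>n. cnj (u n) * w n" A] by (simp add: norm_mult)
  also have "\<dots> \<le> L2_set (\<lambda>n. cmod (u n)) A * L2_set (\<lambda>n. cmod (w n)) A"
    by (rule L2_set_mult_ineq)
  finally show ?thesis .
qed

lemma coercive_solution_L2_set_le:
  fixes R :: "nat \<Rightarrow> nat \<Rightarrow> complex" and w :: "nat \<Rightarrow> complex"
  assumes b: "b > 0"
    and coercive: "\<And>y. b * (\<Sum>n\<in>{0..<N}. (cmod (y n))\<^sup>2)
      \<le> Re (\<Sum>n\<in>{0..<N}. cnj (y n) * (\<Sum>j\<in>{0..<N}. R n j * y j))"
  shows "b * L2_set (\<lambda>n. cmod (w n)) {0..<N}
    \<le> L2_set (\<lambda>n. cmod (\<Sum>j\<in>{0..<N}. R n j * w j)) {0..<N}"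
proof -
  define r where "r n = (\<Sum>j\<in>{0..<N}. R n j * w j)" for n
  define nw where "nw = L2_set (\<lambda>n. cmod (w n)) {0..<N}"
  define nr where "nr = L2_set (\<lambda>n. cmod (r n)) {0..<N}"
  have "b * nw\<^sup>2 \<le> Re (\<Sum>n\<in>{0..<N}. cnj (w n) * r n)"
    using coercive[of w] unfolding nw_def r_def L2_set_def by (simp add: sum_nonneg)
  also have "\<dots> \<le> nw * nr"
    unfolding nw_def nr_def using complex_Re_le_cmod cmod_sum_cnj_mult_le_L2_set order_trans by blast
  finally have "b * nw\<^sup>2 \<le> nw * nr" .
  moreover have "nw \<ge> 0" "nr \<ge> 0"
    by (simp_all add: nw_def nr_def)
  ultimately have "b * nw \<le> nr"
    by (cases "nw = 0") (simp_all add: power2_eq_square)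
  then show ?thesis
    by (simp add: nw_def nr_def r_def)
qed

lemma constant_vector_residual_le:
  fixes R :: "nat \<Rightarrow> nat \<Rightarrow> complex" and u z :: "nat \<Rightarrow> complex"
    and \<alpha> \<gamma> \<mu> \<beta> \<delta> :: real
  assumes sol: "\<And>n. n < N \<Longrightarrow> (\<Sum>j\<in>{0..<N}. R n j * z j) = u n"
    and beta: "(\<alpha> * N + \<gamma>) * \<beta> = \<mu>"
    and delta: "\<delta> = (\<Sum>n\<in>{0..<N}. cmod (u n - \<mu>))
      + (\<Sum>n\<in>{0..<N}. \<Sum>j\<in>{0..<N}. cmod (R n j - (\<alpha> + (if n = j then \<gamma> else 0))))"
  shows "(\<Sum>n\<in>{0..<N}. cmod (\<Sum>j\<in>{0..<N}. R n j * (z j - \<beta>))) \<le> (1 + \<bar>\<beta>\<bar>) * \<delta>"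
proof -
  define D where "D n j = R n j - complex_of_real (\<alpha> + (if n = j then \<gamma> else 0))" for n j
  have limit_row: "(\<Sum>j\<in>{0..<N}. complex_of_real (\<alpha> + (if n = j then \<gamma> else 0)) * \<beta>) = \<mu>"
    if "n < N" for n
  proof -
    have "(\<Sum>j\<in>{0..<N}. complex_of_real (\<alpha> + (if n = j then \<gamma> else 0)) * \<beta>)
        = (\<Sum>j\<in>{0..<N}. complex_of_real (\<alpha> * \<beta>) + (if n = j then complex_of_real (\<gamma> * \<beta>) else 0))"
      by (intro sum.cong) (auto simp: distrib_right)
    also have "\<dots> = complex_of_real ((\<alpha> * N + \<gamma>) * \<beta>)"
      using that by (simp add: sum.distrib algebra_simps)
    finally show ?thesis
      using beta by simp
  qed
  have residual: "(\<Sum>j\<in>{0..<N}. R n j * (z j - \<beta>)) = (u n - \<mu>) - (\<Sum>j\<in>{0..<N}. D n j * \<beta>)"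
    if "n < N" for n
    using sol[OF that] limit_row[OF that]
    by (simp add: D_def right_diff_distrib left_diff_distrib sum_subtractf)
  have "(\<Sum>n\<in>{0..<N}. cmod (\<Sum>j\<in>{0..<N}. R n j * (z j - \<beta>)))
      \<le> (\<Sum>n\<in>{0..<N}. cmod (u n - \<mu>) + \<bar>\<beta>\<bar> * (\<Sum>j\<in>{0..<N}. cmod (D n j)))"
  proof (intro sum_mono)
    fix n assume "n \<in> {0..<N}"
    then have "cmod (\<Sum>j\<in>{0..<N}. R n j * (z j - \<beta>))
        \<le> cmod (u n - \<mu>) + cmod (\<Sum>j\<in>{0..<N}. D n j * \<beta>)"
      using residual norm_triangle_ineq4 by simp
    also have "cmod (\<Sum>j\<in>{0..<N}. D n j * \<beta>) \<le> \<bar>\<beta>\<bar> * (\<Sum>j\<in>{0..<N}. cmod (D n j))"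
      using norm_sum[of "\<lambda>j. D n j * \<beta>" "{0..<N}"] by (simp add: norm_mult sum_distrib_left mult.commute)
    finally show "cmod (\<Sum>j\<in>{0..<N}. R n j * (z j - \<beta>))
        \<le> cmod (u n - \<mu>) + \<bar>\<beta>\<bar> * (\<Sum>j\<in>{0..<N}. cmod (D n j))"
      by simp
  qed
  also have "\<dots> = (\<Sum>n\<in>{0..<N}. cmod (u n - \<mu>)) + \<bar>\<beta>\<bar> * (\<Sum>n\<in>{0..<N}. \<Sum>j\<in>{0..<N}. cmod (D n j))"
    by (simp add: sum.distrib sum_distrib_left)
  also have "\<dots> \<le> (1 + \<bar>\<beta>\<bar>) * \<delta>"
  proof -
    have "(\<Sum>n\<in>{0..<N}. cmod (u n - \<mu>)) \<ge> 0" "(\<Sum>n\<in>{0..<N}. \<Sum>j\<in>{0..<N}. cmod (D n j)) \<ge> 0"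
      by (simp_all add: sum_nonneg)
    then show ?thesis
      unfolding delta D_def by (simp add: distrib_left distrib_right)
  qed
  finally show ?thesis .
qed

text \<open>Writing \<open>z = \<beta>\<one> + w\<close>, the constant part contributes \<open>\<mu>\<beta>N\<close> up to \<open>\<delta>|\<beta>|\<close>, and
  coercivity bounds \<open>w\<close> by the residual of \<open>\<beta>\<one>\<close>.\<close>

lemma coercive_quadratic_form_perturbation:
  fixes R :: "nat \<Rightarrow> nat \<Rightarrow> complex" and u z :: "nat \<Rightarrow> complex"
    and b \<alpha> \<gamma> \<mu> \<beta> \<delta> :: real
  assumes b: "b > 0"
    and coercive: "\<And>y. b * (\<Sum>n\<in>{0..<N}. (cmod (y n))\<^sup>2)
      \<le> Re (\<Sum>n\<in>{0..<N}. cnj (y n) * (\<Sum>j\<in>{0..<N}. R n j * y j))"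
    and sol: "\<And>n. n < N \<Longrightarrow> (\<Sum>j\<in>{0..<N}. R n j * z j) = u n"
    and beta: "(\<alpha> * N + \<gamma>) * \<beta> = \<mu>"
    and delta: "\<delta> = (\<Sum>n\<in>{0..<N}. cmod (u n - \<mu>))
      + (\<Sum>n\<in>{0..<N}. \<Sum>j\<in>{0..<N}. cmod (R n j - (\<alpha> + (if n = j then \<gamma> else 0))))"
  shows "\<bar>Re (\<Sum>n\<in>{0..<N}. cnj (u n) * z n) - \<mu> * \<beta> * N\<bar>
    \<le> \<delta> * \<bar>\<beta>\<bar> + (N * \<bar>\<mu>\<bar> + \<delta>) * ((1 + \<bar>\<beta>\<bar>) * \<delta>) / b"
proof -
  define w where "w n = z n - complex_of_real \<beta>" for n
  have \<delta>_ge: "(\<Sum>n\<in>{0..<N}. cmod (u n - \<mu>)) \<le> \<delta>"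
    unfolding delta by (simp add: sum_nonneg)
  have \<delta>_nonneg: "\<delta> \<ge> 0"
    unfolding delta by (intro add_nonneg_nonneg sum_nonneg) auto
  have u_L2: "L2_set (\<lambda>n. cmod (u n)) {0..<N} \<le> N * \<bar>\<mu>\<bar> + \<delta>"
  proof -
    have "L2_set (\<lambda>n. cmod (u n)) {0..<N} \<le> (\<Sum>n\<in>{0..<N}. cmod (u n))"
      by (rule L2_set_le_sum) simp
    also have "\<dots> \<le> (\<Sum>n\<in>{0..<N}. \<bar>\<mu>\<bar> + cmod (u n - \<mu>))"
      using norm_triangle_ineq[of "complex_of_real \<mu>" "u _ - \<mu>"] by (intro sum_mono) simp
    finally show ?thesis
      using \<delta>_ge by (simp add: sum.distrib)
  qed
  have w_L2: "b * L2_set (\<lambda>n. cmod (w n)) {0..<N} \<le> (1 + \<bar>\<beta>\<bar>) * \<delta>"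
    using coercive_solution_L2_set_le[OF b coercive, of w]
      L2_set_le_sum[of "{0..<N}" "\<lambda>n. cmod (\<Sum>j\<in>{0..<N}. R n j * w j)"]
      constant_vector_residual_le[OF sol beta delta]
    unfolding w_def by simp
  have "Re (\<Sum>n\<in>{0..<N}. cnj (u n) * \<beta>) - \<mu> * \<beta> * N = \<beta> * (\<Sum>n\<in>{0..<N}. Re (u n - \<mu>))"
    by (simp add: Re_sum sum_distrib_left sum_subtractf algebra_simps)
  then have "\<bar>Re (\<Sum>n\<in>{0..<N}. cnj (u n) * \<beta>) - \<mu> * \<beta> * N\<bar>
      = \<bar>\<beta>\<bar> * \<bar>\<Sum>n\<in>{0..<N}. Re (u n - \<mu>)\<bar>"
    by (simp only: abs_mult)
  also have "\<dots> \<le> \<bar>\<beta>\<bar> * \<delta>"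
  proof (rule mult_left_mono)
    have "\<bar>\<Sum>n\<in>{0..<N}. Re (u n - \<mu>)\<bar> \<le> (\<Sum>n\<in>{0..<N}. cmod (u n - \<mu>))"
      by (rule order_trans[OF sum_abs sum_mono[OF abs_Re_le_cmod]])
    with \<delta>_ge show "\<bar>\<Sum>n\<in>{0..<N}. Re (u n - \<mu>)\<bar> \<le> \<delta>"
      by linarith
  qed simp
  finally have constant_part: "\<bar>Re (\<Sum>n\<in>{0..<N}. cnj (u n) * \<beta>) - \<mu> * \<beta> * N\<bar> \<le> \<delta> * \<bar>\<beta>\<bar>"
    by (simp add: mult.commute)
  have "\<bar>Re (\<Sum>n\<in>{0..<N}. cnj (u n) * w n)\<bar>
      \<le> L2_set (\<lambda>n. cmod (u n)) {0..<N} * L2_set (\<lambda>n. cmod (w n)) {0..<N}"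
    using abs_Re_le_cmod cmod_sum_cnj_mult_le_L2_set order_trans by blast
  also have "\<dots> \<le> (N * \<bar>\<mu>\<bar> + \<delta>) * ((1 + \<bar>\<beta>\<bar>) * \<delta> / b)"
    using u_L2 w_L2 b \<delta>_nonneg by (intro mult_mono) (simp_all add: field_simps)
  finally have fluctuation_part:
    "\<bar>Re (\<Sum>n\<in>{0..<N}. cnj (u n) * w n)\<bar> \<le> (N * \<bar>\<mu>\<bar> + \<delta>) * ((1 + \<bar>\<beta>\<bar>) * \<delta>) / b"
    by simp
  have "(\<Sum>n\<in>{0..<N}. cnj (u n) * z n) = (\<Sum>n\<in>{0..<N}. cnj (u n) * \<beta>) + (\<Sum>n\<in>{0..<N}. cnj (u n) * w n)"
    unfolding w_def by (simp add: sum.distrib[symmetric] algebra_simps)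
  then show ?thesis
    using constant_part fluctuation_part by simp
qed


section \<open>Convergence to zero in probability\<close>

definition vanishes_in_prob :: "'a measure \<Rightarrow> (nat \<Rightarrow> 'a \<Rightarrow> real) \<Rightarrow> bool" where
  "vanishes_in_prob M X \<longleftrightarrow> (\<forall>L. X L \<in> borel_measurable M) \<and>
     (\<forall>\<eta>>0. (\<lambda>L. measure M {\<omega> \<in> space M. X L \<omega> > \<eta>}) \<longlonglongrightarrow> 0)"

context prob_space
begin

lemma prob_tendsto_zero_subset:
  assumes "(\<lambda>L. prob (B L)) \<longlonglongrightarrow> 0" "\<And>L. B L \<in> events"
    and "eventually (\<lambda>L. A L \<subseteq> B L) sequentially"
  shows "(\<lambda>L. prob (A L)) \<longlonglongrightarrow> 0"
proof (rule Lim_null_comparison[OF _ assms(1)])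
  show "eventually (\<lambda>L. norm (prob (A L)) \<le> prob (B L)) sequentially"
    using assms(3) by eventually_elim (simp add: finite_measure_mono[OF _ assms(2)])
qed

lemma prob_tendsto_zero_Un:
  assumes "(\<lambda>L. prob (A L)) \<longlonglongrightarrow> 0" "(\<lambda>L. prob (B L)) \<longlonglongrightarrow> 0"
    and "\<And>L. A L \<in> events" "\<And>L. B L \<in> events"
  shows "(\<lambda>L. prob (A L \<union> B L)) \<longlonglongrightarrow> 0"
proof (rule Lim_null_comparison[OF _ tendsto_add_zero[OF assms(1,2)]])
  show "eventually (\<lambda>L. norm (prob (A L \<union> B L)) \<le> prob (A L) + prob (B L)) sequentially"
    using assms(3,4) by (simp add: measure_Un_le)
qed

lemma vanishes_in_prob_measurable:
  "vanishes_in_prob M X \<Longrightarrow> X L \<in> borel_measurable M"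
  by (simp add: vanishes_in_prob_def)

lemma vanishes_in_prob_tail:
  "vanishes_in_prob M X \<Longrightarrow> \<eta> > 0 \<Longrightarrow> (\<lambda>L. prob {\<omega> \<in> space M. X L \<omega> > \<eta>}) \<longlonglongrightarrow> 0"
  by (simp add: vanishes_in_prob_def)

lemma vanishes_in_prob_tail_events:
  assumes "vanishes_in_prob M X"
  shows "{\<omega> \<in> space M. X L \<omega> > \<eta>} \<in> events"
proof -
  have [measurable]: "X L \<in> borel_measurable M"
    using assms by (rule vanishes_in_prob_measurable)
  show ?thesis
    by measurable
qed

lemma vanishes_in_prob_zero: "vanishes_in_prob M (\<lambda>L \<omega>. 0)"
  by (simp add: vanishes_in_prob_def)

lemma vanishes_in_prob_mono:
  assumes X: "vanishes_in_prob M X" and Y: "\<And>L. Y L \<in> borel_measurable M"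
    and le: "\<And>L \<omega>. \<omega> \<in> space M \<Longrightarrow> Y L \<omega> \<le> X L \<omega>"
  shows "vanishes_in_prob M Y"
  unfolding vanishes_in_prob_def
proof (intro conjI allI impI Y)
  fix \<eta> :: real assume "\<eta> > 0"
  have sub: "{\<omega> \<in> space M. Y L \<omega> > \<eta>} \<subseteq> {\<omega> \<in> space M. X L \<omega> > \<eta>}" for L
  proof
    fix \<omega> assume "\<omega> \<in> {\<omega> \<in> space M. Y L \<omega> > \<eta>}"
    with le[of \<omega> L] show "\<omega> \<in> {\<omega> \<in> space M. X L \<omega> > \<eta>}"
      by simp
  qed
  show "(\<lambda>L. prob {\<omega> \<in> space M. Y L \<omega> > \<eta>}) \<longlonglongrightarrow> 0"
    by (rule prob_tendsto_zero_subset[OF vanishes_in_prob_tail[OF X \<open>\<eta> > 0\<close>]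
        vanishes_in_prob_tail_events[OF X] always_eventually]) (use sub in blast)
qed

lemma vanishes_in_prob_add:
  assumes X: "vanishes_in_prob M X" and Y: "vanishes_in_prob M Y"
  shows "vanishes_in_prob M (\<lambda>L \<omega>. X L \<omega> + Y L \<omega>)"
  unfolding vanishes_in_prob_def
proof (intro conjI allI impI)
  fix L
  have [measurable]: "X L \<in> borel_measurable M" "Y L \<in> borel_measurable M"
    using X Y by (simp_all add: vanishes_in_prob_measurable)
  show "(\<lambda>\<omega>. X L \<omega> + Y L \<omega>) \<in> borel_measurable M"
    by measurable
next
  fix \<eta> :: real assume "\<eta> > 0"
  define U where "U L = {\<omega> \<in> space M. X L \<omega> > \<eta>/2} \<union> {\<omega> \<in> space M. Y L \<omega> > \<eta>/2}" for L
  have lim: "(\<lambda>L. prob (U L)) \<longlonglongrightarrow> 0"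
    unfolding U_def using \<open>\<eta> > 0\<close>
    by (intro prob_tendsto_zero_Un vanishes_in_prob_tail vanishes_in_prob_tail_events X Y) simp_all
  have events: "U L \<in> events" for L
    unfolding U_def using vanishes_in_prob_tail_events[OF X] vanishes_in_prob_tail_events[OF Y]
    by blast
  have sub: "{\<omega> \<in> space M. X L \<omega> + Y L \<omega> > \<eta>} \<subseteq> U L" for L
    by (auto simp: U_def)
  show "(\<lambda>L. prob {\<omega> \<in> space M. X L \<omega> + Y L \<omega> > \<eta>}) \<longlonglongrightarrow> 0"
    by (rule prob_tendsto_zero_subset[OF lim events always_eventually]) (use sub in blast)
qed

lemma vanishes_in_prob_sum:
  assumes "finite I" "\<And>i. i \<in> I \<Longrightarrow> vanishes_in_prob M (X i)"
  shows "vanishes_in_prob M (\<lambda>L \<omega>. \<Sum>i\<in>I. X i L \<omega>)"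
  using assms by (induction I rule: finite_induct) (auto intro: vanishes_in_prob_add vanishes_in_prob_zero)

lemma vanishes_in_prob_cmult:
  assumes X: "vanishes_in_prob M X" and c: "c \<ge> 0"
  shows "vanishes_in_prob M (\<lambda>L \<omega>. c * X L \<omega>)"
proof (cases "c = 0")
  case True
  then show ?thesis
    using vanishes_in_prob_zero by simp
next
  case False
  with c have "c > 0"
    by simp
  then have "{\<omega> \<in> space M. c * X L \<omega> > \<eta>} = {\<omega> \<in> space M. X L \<omega> > \<eta> / c}" for L \<eta>
    by (auto simp: field_simps)
  moreover have "(\<lambda>\<omega>. c * X L \<omega>) \<in> borel_measurable M" for L
    using vanishes_in_prob_measurable[OF X] by (rule borel_measurable_times[OF borel_measurable_const])
  ultimately show ?thesis
    using X \<open>c > 0\<close> unfolding vanishes_in_prob_def by simp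
qed

lemma vanishes_in_prob_power2:
  assumes X: "vanishes_in_prob M X" and nonneg: "\<And>L \<omega>. \<omega> \<in> space M \<Longrightarrow> X L \<omega> \<ge> 0"
  shows "vanishes_in_prob M (\<lambda>L \<omega>. (X L \<omega>)\<^sup>2)"
  unfolding vanishes_in_prob_def
proof (intro conjI allI impI)
  fix L
  have [measurable]: "X L \<in> borel_measurable M"
    using X by (rule vanishes_in_prob_measurable)
  show "(\<lambda>\<omega>. (X L \<omega>)\<^sup>2) \<in> borel_measurable M"
    by measurable
next
  fix \<eta> :: real assume "\<eta> > 0"
  have sub: "{\<omega> \<in> space M. (X L \<omega>)\<^sup>2 > \<eta>} \<subseteq> {\<omega> \<in> space M. X L \<omega> > sqrt \<eta>}" for L
    using real_sqrt_less_mono nonneg by fastforce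
  from \<open>\<eta> > 0\<close> have "sqrt \<eta> > 0"
    by simp
  show "(\<lambda>L. prob {\<omega> \<in> space M. (X L \<omega>)\<^sup>2 > \<eta>}) \<longlonglongrightarrow> 0"
    by (rule prob_tendsto_zero_subset[OF vanishes_in_prob_tail[OF X \<open>sqrt \<eta> > 0\<close>]
        vanishes_in_prob_tail_events[OF X] always_eventually]) (use sub in blast)
qed

lemma conv_in_prob_if_deviation_le:
  assumes D: "vanishes_in_prob M D"
    and le: "\<And>L \<omega>. L > 0 \<Longrightarrow> \<omega> \<in> space M \<Longrightarrow> \<bar>X L \<omega> - c\<bar> \<le> D L \<omega>"
  shows "conv_in_prob M X c"
  unfolding conv_in_prob_def
proof (intro allI impI)
  fix \<epsilon> :: real assume "\<epsilon> > 0"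
  have "eventually (\<lambda>L. {\<omega> \<in> space M. \<bar>X L \<omega> - c\<bar> > \<epsilon>} \<subseteq> {\<omega> \<in> space M. D L \<omega> > \<epsilon>}) sequentially"
    using eventually_gt_at_top[of 0] by eventually_elim (auto dest: le)
  then show "(\<lambda>L. prob {\<omega> \<in> space M. \<bar>X L \<omega> - c\<bar> > \<epsilon>}) \<longlonglongrightarrow> 0"
    by (rule prob_tendsto_zero_subset[OF vanishes_in_prob_tail[OF D \<open>\<epsilon> > 0\<close>]
        vanishes_in_prob_tail_events[OF D]])
qed


lemma expectation_square_sum_le:
  fixes D :: "nat \<Rightarrow> 'a \<Rightarrow> real"
  assumes [measurable]: "\<And>l. D l \<in> borel_measurable M"
    and sq: "\<And>l. integrable M (\<lambda>\<omega>. (D l \<omega>)\<^sup>2)"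
    and mean: "\<And>l. expectation (D l) = 0"
    and var: "\<And>l. expectation (\<lambda>\<omega>. (D l \<omega>)\<^sup>2) \<le> C"
    and ind: "\<And>l k. l \<noteq> k \<Longrightarrow> indep_var borel (D l) borel (D k)"
  shows "integrable M (\<lambda>\<omega>. (\<Sum>l<L. D l \<omega>)\<^sup>2)"
    and "expectation (\<lambda>\<omega>. (\<Sum>l<L. D l \<omega>)\<^sup>2) \<le> L * C"
proof -
  have int: "integrable M (D l)" for l
    by (rule square_integrable_imp_integrable[OF _ sq]) simp
  have cross: "integrable M (\<lambda>\<omega>. D l \<omega> * D k \<omega>)
      \<and> expectation (\<lambda>\<omega>. D l \<omega> * D k \<omega>) \<le> (if l = k then C else 0)" for l k
  proof (cases "l = k")
    case True
    then show ?thesis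
      using sq[of l] var[of l] by (simp add: power2_eq_square)
  next
    case False
    then show ?thesis
      using indep_var_integrable[OF ind[OF False] int int]
        indep_var_lebesgue_integral[OF ind[OF False] int int] mean
      by simp
  qed
  have square: "(\<Sum>l<L. D l \<omega>)\<^sup>2 = (\<Sum>l<L. \<Sum>k<L. D l \<omega> * D k \<omega>)" for \<omega>
    by (simp add: power2_eq_square sum_product)
  show "integrable M (\<lambda>\<omega>. (\<Sum>l<L. D l \<omega>)\<^sup>2)"
    unfolding square using cross by auto
  have "expectation (\<lambda>\<omega>. (\<Sum>l<L. D l \<omega>)\<^sup>2) = (\<Sum>l<L. \<Sum>k<L. expectation (\<lambda>\<omega>. D l \<omega> * D k \<omega>))"
    unfolding square using cross by (simp add: Bochner_Integration.integral_sum)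
  also have "\<dots> \<le> (\<Sum>l<L. \<Sum>k<L. (if l = k then C else 0))"
    using cross by (intro sum_mono) auto
  finally show "expectation (\<lambda>\<omega>. (\<Sum>l<L. D l \<omega>)\<^sup>2) \<le> L * C"
    by simp
qed

lemma expectation_square_centered_sum_le:
  fixes X :: "nat \<Rightarrow> 'a \<Rightarrow> real"
  assumes [measurable]: "\<And>l. X l \<in> borel_measurable M"
    and sq: "\<And>l. integrable M (\<lambda>\<omega>. (X l \<omega>)\<^sup>2)"
    and mean: "\<And>l. expectation (X l) = \<mu>"
    and var: "\<And>l. expectation (\<lambda>\<omega>. (X l \<omega>)\<^sup>2) \<le> C"
    and ind: "\<And>l k. l \<noteq> k \<Longrightarrow> indep_var borel (X l) borel (X k)"
  shows "integrable M (\<lambda>\<omega>. (\<Sum>l<L. X l \<omega> - \<mu>)\<^sup>2)"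
    and "expectation (\<lambda>\<omega>. (\<Sum>l<L. X l \<omega> - \<mu>)\<^sup>2) \<le> L * C"
proof -
  define D where "D l \<omega> = X l \<omega> - \<mu>" for l \<omega>
  have D_meas: "D l \<in> borel_measurable M" for l
    unfolding D_def by measurable
  have int: "integrable M (X l)" for l
    by (rule square_integrable_imp_integrable[OF _ sq]) simp
  have D_sq: "(D l \<omega>)\<^sup>2 = (X l \<omega>)\<^sup>2 - 2 * \<mu> * X l \<omega> + \<mu>\<^sup>2" for l \<omega>
    by (simp add: D_def power2_eq_square algebra_simps)
  have D_int: "integrable M (\<lambda>\<omega>. (D l \<omega>)\<^sup>2)" for l
    unfolding D_sq using sq int by auto
  have D_mean: "expectation (D l) = 0" for l
    using int mean by (simp add: D_def[abs_def] prob_space)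
  have D_var: "expectation (\<lambda>\<omega>. (D l \<omega>)\<^sup>2) \<le> C" for l
  proof -
    have "expectation (\<lambda>\<omega>. (D l \<omega>)\<^sup>2) = expectation (\<lambda>\<omega>. (X l \<omega>)\<^sup>2) - \<mu>\<^sup>2"
      unfolding D_sq using sq int mean by (simp add: prob_space power2_eq_square)
    then show ?thesis
      using var[of l] by (smt (verit) zero_le_power2)
  qed
  have D_ind: "indep_var borel (D l) borel (D k)" if "l \<noteq> k" for l k
    using indep_var_compose[OF ind[OF that], of "\<lambda>x. x - \<mu>" borel "\<lambda>x. x - \<mu>" borel]
    by (simp add: o_def D_def[abs_def])
  from expectation_square_sum_le[of D, OF D_meas D_int D_mean D_var D_ind]
  show "integrable M (\<lambda>\<omega>. (\<Sum>l<L. X l \<omega> - \<mu>)\<^sup>2)"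
    and "expectation (\<lambda>\<omega>. (\<Sum>l<L. X l \<omega> - \<mu>)\<^sup>2) \<le> L * C"
    by (simp_all add: D_def)
qed

lemma weak_law_pairwise_indep:
  fixes X :: "nat \<Rightarrow> 'a \<Rightarrow> real"
  assumes [measurable]: "\<And>l. X l \<in> borel_measurable M"
    and sq: "\<And>l. integrable M (\<lambda>\<omega>. (X l \<omega>)\<^sup>2)"
    and mean: "\<And>l. expectation (X l) = \<mu>"
    and var: "\<And>l. expectation (\<lambda>\<omega>. (X l \<omega>)\<^sup>2) \<le> C"
    and ind: "\<And>l k. l \<noteq> k \<Longrightarrow> indep_var borel (X l) borel (X k)"
  shows "vanishes_in_prob M (\<lambda>L \<omega>. \<bar>(\<Sum>l<L. X l \<omega>) / L - \<mu>\<bar>)"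
  unfolding vanishes_in_prob_def
proof (intro conjI allI impI)
  fix \<eta> :: real assume \<eta>: "\<eta> > 0"
  note moments = expectation_square_centered_sum_le[OF assms]
  have Chebyshev: "prob {\<omega> \<in> space M. \<bar>(\<Sum>l<L. X l \<omega>) / L - \<mu>\<bar> > \<eta>} \<le> C / \<eta>\<^sup>2 * inverse (real L)"
    if "L > 0" for L
  proof -
    have L: "real L > 0"
      using that by simp
    have "\<bar>(\<Sum>l<L. X l \<omega>) / L - \<mu>\<bar> > \<eta> \<longleftrightarrow> (\<Sum>l<L. X l \<omega> - \<mu>)\<^sup>2 > (L * \<eta>)\<^sup>2" for \<omega>
    proof -
      have "(\<Sum>l<L. X l \<omega>) / L - \<mu> = (\<Sum>l<L. X l \<omega> - \<mu>) / L"
        using L by (simp add: sum_subtractf field_simps)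
      then have "\<bar>(\<Sum>l<L. X l \<omega>) / L - \<mu>\<bar> > \<eta> \<longleftrightarrow> \<bar>\<Sum>l<L. X l \<omega> - \<mu>\<bar> > \<bar>L * \<eta>\<bar>"
        using L \<eta> by (simp add: abs_divide pos_less_divide_eq mult.commute)
      also have "\<dots> \<longleftrightarrow> (\<Sum>l<L. X l \<omega> - \<mu>)\<^sup>2 > (L * \<eta>)\<^sup>2"
        by (simp add: abs_le_square_iff linorder_not_le[symmetric])
      finally show ?thesis .
    qed
    then have "prob {\<omega> \<in> space M. \<bar>(\<Sum>l<L. X l \<omega>) / L - \<mu>\<bar> > \<eta>}
        \<le> prob {\<omega> \<in> space M. (\<Sum>l<L. X l \<omega> - \<mu>)\<^sup>2 \<ge> (L * \<eta>)\<^sup>2}"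
      by (intro finite_measure_mono) (auto, measurable)
    also have "\<dots> \<le> expectation (\<lambda>\<omega>. (\<Sum>l<L. X l \<omega> - \<mu>)\<^sup>2) / (L * \<eta>)\<^sup>2"
      using \<eta> L by (intro integral_Markov_inequality_measure[OF moments(1)]) auto
    also have "\<dots> \<le> (L * C) / (L * \<eta>)\<^sup>2"
      by (intro divide_right_mono moments(2) zero_le_power2)
    also have "\<dots> = C / \<eta>\<^sup>2 * inverse (real L)"
      using L by (simp add: field_simps power2_eq_square)
    finally show ?thesis .
  qed
  show "(\<lambda>L. prob {\<omega> \<in> space M. \<bar>(\<Sum>l<L. X l \<omega>) / L - \<mu>\<bar> > \<eta>}) \<longlonglongrightarrow> 0"
  proof (rule Lim_null_comparison)
    show "eventually (\<lambda>L. norm (prob {\<omega> \<in> space M. \<bar>(\<Sum>l<L. X l \<omega>) / L - \<mu>\<bar> > \<eta>})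
        \<le> C / \<eta>\<^sup>2 * inverse (real L)) sequentially"
      using eventually_gt_at_top[of 0] by eventually_elim (use Chebyshev in simp)
    show "(\<lambda>L. C / \<eta>\<^sup>2 * inverse (real L)) \<longlonglongrightarrow> 0"
      using tendsto_mult[OF tendsto_const lim_inverse_n, of "C / \<eta>\<^sup>2"] by simp
  qed
qed simp


lemma prob_gt_le_of_expectation_eq_1:
  fixes Y :: "'a \<Rightarrow> real"
  assumes [measurable]: "Y \<in> borel_measurable M"
    and nonneg: "\<And>\<omega>. \<omega> \<in> space M \<Longrightarrow> 0 \<le> Y \<omega>"
    and int: "integrable M Y" and E: "expectation Y = 1"
    and \<delta>: "0 < \<delta>" "\<delta> \<le> 1" and \<eta>: "0 < \<eta>"
  shows "prob {\<omega> \<in> space M. Y \<omega> > 1 + \<eta>} \<le> (\<delta> + prob {\<omega> \<in> space M. Y \<omega> < 1 - \<delta>}) / \<eta>"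
proof -
  define Zp where "Zp \<omega> = max (Y \<omega> - (1 - \<delta>)) 0" for \<omega>
  define Zm where "Zm \<omega> = max ((1 - \<delta>) - Y \<omega>) 0" for \<omega>
  define A where "A = {\<omega> \<in> space M. Y \<omega> < 1 - \<delta>}"
  have A [measurable]: "A \<in> sets M"
    unfolding A_def by measurable
  have [measurable]: "Zp \<in> borel_measurable M"
    unfolding Zp_def by measurable
  have iZp: "integrable M Zp" and iZm: "integrable M Zm"
    unfolding Zp_def Zm_def using int by auto
  have "Zp = (\<lambda>\<omega>. (Y \<omega> - (1 - \<delta>)) + Zm \<omega>)"
    unfolding Zp_def Zm_def by (auto simp: max_def)
  then have EZp: "expectation Zp = \<delta> + expectation Zm"
    using int iZm E by (simp add: prob_space)
  have "expectation Zm \<le> expectation (indicator A :: 'a \<Rightarrow> real)"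
  proof (rule integral_mono[OF iZm])
    show "integrable M (indicator A :: 'a \<Rightarrow> real)"
      using A by (auto intro!: integrable_real_indicator simp: emeasure_eq_measure)
    fix \<omega> assume "\<omega> \<in> space M"
    then show "Zm \<omega> \<le> indicator A \<omega>"
      using nonneg[of \<omega>] \<delta> by (auto simp: Zm_def A_def indicator_def)
  qed
  also have "\<dots> = prob A"
    using A by simp
  finally have EZm: "expectation Zm \<le> prob A" .
  have "prob {\<omega> \<in> space M. Y \<omega> > 1 + \<eta>} \<le> prob {\<omega> \<in> space M. Zp \<omega> \<ge> \<eta> + \<delta>}"
    by (intro finite_measure_mono) (auto simp: Zp_def)
  also have "\<dots> \<le> expectation Zp / (\<eta> + \<delta>)"
    by (rule integral_Markov_inequality_measure[OF iZp, of "space M"]) (use \<eta> \<delta> in \<open>auto simp: Zp_def\<close>)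
  also have "\<dots> \<le> (\<delta> + prob A) / (\<eta> + \<delta>)"
    using EZp EZm \<eta> \<delta> by (intro divide_right_mono) auto
  also have "\<dots> \<le> (\<delta> + prob A) / \<eta>"
    using \<eta> \<delta> by (intro divide_left_mono) auto
  finally show ?thesis
    unfolding A_def .
qed

lemma prob_gt_tendsto_zero_of_mean_one:
  fixes Y :: "nat \<Rightarrow> 'a \<Rightarrow> real"
  assumes [measurable]: "\<And>L. Y L \<in> borel_measurable M"
    and nonneg: "\<And>L \<omega>. \<omega> \<in> space M \<Longrightarrow> 0 \<le> Y L \<omega>"
    and int: "\<And>L. integrable M (Y L)"
    and E: "eventually (\<lambda>L. expectation (Y L) = 1) sequentially"
    and lower: "\<And>\<delta>. \<delta> > 0 \<Longrightarrow> (\<lambda>L. prob {\<omega> \<in> space M. Y L \<omega> < 1 - \<delta>}) \<longlonglongrightarrow> 0"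
    and \<eta>: "\<eta> > 0"
  shows "(\<lambda>L. prob {\<omega> \<in> space M. Y L \<omega> > 1 + \<eta>}) \<longlonglongrightarrow> 0"
  unfolding order_tendsto_iff
proof (intro conjI allI impI)
  fix a :: real assume "a < 0"
  then show "eventually (\<lambda>L. a < prob {\<omega> \<in> space M. Y L \<omega> > 1 + \<eta>}) sequentially"
    using measure_nonneg less_le_trans by (intro always_eventually allI) blast
next
  fix u :: real assume u: "u > 0"
  define \<delta> where "\<delta> = min 1 (u * \<eta> / 2)"
  have \<delta>: "0 < \<delta>" "\<delta> \<le> 1" "\<delta> \<le> u * \<eta> / 2"
    using u \<eta> by (auto simp: \<delta>_def)
  have "eventually (\<lambda>L. prob {\<omega> \<in> space M. Y L \<omega> < 1 - \<delta>} < u * \<eta> / 2) sequentially"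
    using u \<eta> by (intro order_tendstoD(2)[OF lower[OF \<delta>(1)]]) simp
  then show "eventually (\<lambda>L. prob {\<omega> \<in> space M. Y L \<omega> > 1 + \<eta>} < u) sequentially"
    using E
  proof eventually_elim
    case (elim L)
    have "prob {\<omega> \<in> space M. Y L \<omega> > 1 + \<eta>} \<le> (\<delta> + prob {\<omega> \<in> space M. Y L \<omega> < 1 - \<delta>}) / \<eta>"
      by (rule prob_gt_le_of_expectation_eq_1) (use nonneg int elim \<delta> \<eta> in auto)
    also have "\<dots> < (u * \<eta> / 2 + u * \<eta> / 2) / \<eta>"
      using elim \<delta> \<eta> by (intro divide_strict_right_mono) (auto simp: mult.commute)
    also have "\<dots> = u"
      using \<eta> by simp
    finally show ?case .
  qed
qed

lemma vanishes_in_prob_of_mean_one: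
  fixes Y :: "nat \<Rightarrow> 'a \<Rightarrow> real"
  assumes [measurable]: "\<And>L. Y L \<in> borel_measurable M"
    and nonneg: "\<And>L \<omega>. \<omega> \<in> space M \<Longrightarrow> 0 \<le> Y L \<omega>"
    and int: "\<And>L. integrable M (Y L)"
    and E: "eventually (\<lambda>L. expectation (Y L) = 1) sequentially"
    and lower: "\<And>\<delta>. \<delta> > 0 \<Longrightarrow> (\<lambda>L. prob {\<omega> \<in> space M. Y L \<omega> < 1 - \<delta>}) \<longlonglongrightarrow> 0"
  shows "vanishes_in_prob M (\<lambda>L \<omega>. \<bar>Y L \<omega> - 1\<bar>)"
  unfolding vanishes_in_prob_def
proof (intro conjI allI impI)
  fix L
  show "(\<lambda>\<omega>. \<bar>Y L \<omega> - 1\<bar>) \<in> borel_measurable M"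
    by measurable
next
  fix \<eta> :: real assume \<eta>: "\<eta> > 0"
  have "(\<lambda>L. prob ({\<omega> \<in> space M. Y L \<omega> > 1 + \<eta>} \<union> {\<omega> \<in> space M. Y L \<omega> < 1 - \<eta>})) \<longlonglongrightarrow> 0"
    by (rule prob_tendsto_zero_Un[OF prob_gt_tendsto_zero_of_mean_one[OF assms \<eta>] lower[OF \<eta>]])
      measurable
  moreover have "{\<omega> \<in> space M. Y L \<omega> > 1 + \<eta>} \<union> {\<omega> \<in> space M. Y L \<omega> < 1 - \<eta>} \<in> events" for L
    by measurable
  ultimately show "(\<lambda>L. prob {\<omega> \<in> space M. \<bar>Y L \<omega> - 1\<bar> > \<eta>}) \<longlonglongrightarrow> 0"
    by (rule prob_tendsto_zero_subset) (auto intro: always_eventually)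
qed

lemma weak_law_pairwise_indep_complex:
  fixes Z :: "nat \<Rightarrow> 'a \<Rightarrow> complex"
  assumes [measurable]: "\<And>l. Z l \<in> borel_measurable M"
    and sq: "\<And>l. integrable M (\<lambda>\<omega>. (cmod (Z l \<omega>))\<^sup>2)"
    and var: "\<And>l. expectation (\<lambda>\<omega>. (cmod (Z l \<omega>))\<^sup>2) \<le> C"
    and int: "\<And>l. integrable M (Z l)" and mean: "\<And>l. expectation (Z l) = \<mu>"
    and ind: "\<And>l k. l \<noteq> k \<Longrightarrow> indep_var borel (Z l) borel (Z k)"
  shows "vanishes_in_prob M (\<lambda>L \<omega>. cmod ((\<Sum>l<L. Z l \<omega>) / L - \<mu>))"
proof -
  have part_moments: "integrable M (\<lambda>\<omega>. (f (Z l \<omega>))\<^sup>2) \<and> expectation (\<lambda>\<omega>. (f (Z l \<omega>))\<^sup>2) \<le> C"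
    if f: "\<And>z. \<bar>f z\<bar> \<le> cmod z" and [measurable]: "f \<in> borel_measurable borel" for f :: "complex \<Rightarrow> real" and l
  proof -
    have le: "(f (Z l \<omega>))\<^sup>2 \<le> (cmod (Z l \<omega>))\<^sup>2" for \<omega>
      using f[of "Z l \<omega>"] by (metis abs_le_square_iff abs_norm_cancel)
    have i: "integrable M (\<lambda>\<omega>. (f (Z l \<omega>))\<^sup>2)"
      by (rule Bochner_Integration.integrable_bound[OF sq[of l]]) (use le in auto)
    moreover have "expectation (\<lambda>\<omega>. (f (Z l \<omega>))\<^sup>2) \<le> expectation (\<lambda>\<omega>. (cmod (Z l \<omega>))\<^sup>2)"
      by (rule integral_mono[OF i sq]) (rule le)
    ultimately show ?thesis
      using var[of l] by simp
  qed
  have Re_part: "vanishes_in_prob M (\<lambda>L \<omega>. \<bar>(\<Sum>l<L. Re (Z l \<omega>)) / L - Re \<mu>\<bar>)"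
  proof (rule weak_law_pairwise_indep)
    show "expectation (\<lambda>\<omega>. Re (Z l \<omega>)) = Re \<mu>" for l
      using int mean by simp
    show "indep_var borel (\<lambda>\<omega>. Re (Z l \<omega>)) borel (\<lambda>\<omega>. Re (Z k \<omega>))" if "l \<noteq> k" for l k
      using indep_var_compose[OF ind[OF that], of Re borel Re borel] by (simp add: o_def)
  qed (use part_moments[of Re] abs_Re_le_cmod in auto)
  have Im_part: "vanishes_in_prob M (\<lambda>L \<omega>. \<bar>(\<Sum>l<L. Im (Z l \<omega>)) / L - Im \<mu>\<bar>)"
  proof (rule weak_law_pairwise_indep)
    show "expectation (\<lambda>\<omega>. Im (Z l \<omega>)) = Im \<mu>" for l
      using int mean by simp
    show "indep_var borel (\<lambda>\<omega>. Im (Z l \<omega>)) borel (\<lambda>\<omega>. Im (Z k \<omega>))" if "l \<noteq> k" for l k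
      using indep_var_compose[OF ind[OF that], of Im borel Im borel] by (simp add: o_def)
  qed (use part_moments[of Im] abs_Im_le_cmod in auto)
  show ?thesis
  proof (rule vanishes_in_prob_mono[OF vanishes_in_prob_add[OF Re_part Im_part]])
    fix L \<omega>
    have "Re ((\<Sum>l<L. Z l \<omega>) / L - \<mu>) = (\<Sum>l<L. Re (Z l \<omega>)) / L - Re \<mu>"
      "Im ((\<Sum>l<L. Z l \<omega>) / L - \<mu>) = (\<Sum>l<L. Im (Z l \<omega>)) / L - Im \<mu>"
      by (simp_all add: Re_sum Im_sum)
    then show "cmod ((\<Sum>l<L. Z l \<omega>) / L - \<mu>)
        \<le> \<bar>(\<Sum>l<L. Re (Z l \<omega>)) / L - Re \<mu>\<bar> + \<bar>(\<Sum>l<L. Im (Z l \<omega>)) / L - Im \<mu>\<bar>"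
      using cmod_le[of "(\<Sum>l<L. Z l \<omega>) / L - \<mu>"] by simp
  qed measurable
qed

end


section \<open>Ricean channels\<close>

definition nocsis_exponent :: "real \<Rightarrow> real \<Rightarrow> real \<Rightarrow> real \<Rightarrow> nat \<Rightarrow> real \<Rightarrow> real" where
  "nocsis_exponent \<theta> s_eta2 s_nu2 P N K =
     \<theta>\<^sup>2 / 8 * (P * K * N / (s_eta2 * P * (K * N + 1) + s_nu2 * (K + 1)))"

locale ricean_channels = prob_space M for M :: "'a measure" +
  fixes hdf :: "nat \<Rightarrow> nat \<Rightarrow> 'a \<Rightarrow> complex" and K :: real
  assumes hdf_measurable [measurable]: "\<And>n l. hdf n l \<in> borel_measurable M"
    and hdf_indep: "indep_vars (\<lambda>_. borel) (\<lambda>(n, l). hdf n l) UNIV"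
    and hdf_distr: "\<And>n l. distr M borel (hdf n l) = distr M borel (hdf 0 0)"
    and hdf_mean: "\<And>n l. integrable M (hdf n l) \<and> expectation (hdf n l) = 0"
    and hdf_power: "\<And>n l. integrable M (\<lambda>\<omega>. (cmod (hdf n l \<omega>))\<^sup>2)
      \<and> expectation (\<lambda>\<omega>. (cmod (hdf n l \<omega>))\<^sup>2) = 1"
    and K_nonneg: "K \<ge> 0"
begin

lemma indep_var_blocks:
  assumes "A \<inter> B = {}"
    and [measurable]: "F \<in> borel_measurable (PiM A (\<lambda>_. borel))" "G \<in> borel_measurable (PiM B (\<lambda>_. borel))"
  shows "indep_var borel (\<lambda>\<omega>. F (\<lambda>i\<in>A. hdf (fst i) (snd i) \<omega>)) borel (\<lambda>\<omega>. G (\<lambda>i\<in>B. hdf (fst i) (snd i) \<omega>))"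
proof -
  have "indep_var (PiM A (\<lambda>_. borel)) (\<lambda>\<omega>. restrict (\<lambda>i. (\<lambda>(n, l). hdf n l) i \<omega>) A)
      (PiM B (\<lambda>_. borel)) (\<lambda>\<omega>. restrict (\<lambda>i. (\<lambda>(n, l). hdf n l) i \<omega>) B)"
    by (rule indep_var_restrict[OF hdf_indep assms(1)]) auto
  from indep_var_compose[OF this assms(2,3)] show ?thesis
    by (simp add: o_def split_beta)
qed

lemma indep_var_entries:
  assumes "(n, l) \<noteq> (n', l')"
    and [measurable]: "f \<in> borel_measurable borel" "g \<in> borel_measurable borel"
  shows "indep_var borel (\<lambda>\<omega>. f (hdf n l \<omega>)) borel (\<lambda>\<omega>. g (hdf n' l' \<omega>))"
  using indep_var_blocks[of "{(n,l)}" "{(n',l')}" "\<lambda>x. f (x (n,l))" "\<lambda>x. g (x (n',l'))"] assms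
  by auto

lemma indep_var_entry_pairs:
  assumes "l \<noteq> k" "n \<noteq> n'"
    and F [measurable]: "(\<lambda>x. F (fst x) (snd x)) \<in> borel_measurable (borel \<Otimes>\<^sub>M borel)"
  shows "indep_var borel (\<lambda>\<omega>. F (hdf n l \<omega>) (hdf n' l \<omega>)) borel (\<lambda>\<omega>. F (hdf n k \<omega>) (hdf n' k \<omega>))"
proof -
  have F_pair: "(\<lambda>x. F (x (a,b)) (x (a',b))) \<in> borel_measurable (PiM {(a,b),(a',b)} (\<lambda>_. borel))"
    for a a' b
  proof -
    have "(\<lambda>x. (x (a,b), x (a',b))) \<in> measurable (PiM {(a,b),(a',b)} (\<lambda>_. borel)) (borel \<Otimes>\<^sub>M borel)"
      by measurable
    from measurable_comp[OF this F] show ?thesis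
      by (simp add: o_def)
  qed
  show ?thesis
    using indep_var_blocks[OF _ F_pair F_pair, of n l n' n k n'] assms(1,2) by simp
qed

definition los_amp :: real where "los_amp = sqrt (K / (K + 1))"

definition diff_amp :: real where "diff_amp = 1 / sqrt (K + 1)"

lemma los_amp_diff_amp_sq:
  "los_amp\<^sup>2 + diff_amp\<^sup>2 = 1" "los_amp\<^sup>2 = K / (K + 1)" "diff_amp\<^sup>2 = 1 / (K + 1)"
  using K_nonneg by (auto simp: los_amp_def diff_amp_def power_divide field_simps)

lemma ricean_eq: "ricean K x = complex_of_real los_amp + complex_of_real diff_amp * x"
  by (simp add: ricean_def los_amp_def diff_amp_def)

lemma ricean_norm2:
  "(cmod (ricean K x))\<^sup>2 = los_amp\<^sup>2 + 2 * los_amp * diff_amp * Re x + diff_amp\<^sup>2 * (cmod x)\<^sup>2"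
  unfolding ricean_eq cmod_power2 by (simp add: power2_eq_square algebra_simps)

lemma ricean_measurable [measurable]: "ricean K \<in> borel_measurable borel"
  unfolding ricean_def by measurable

lemma cnj_ricean_measurable [measurable]: "(\<lambda>x. cnj (ricean K x)) \<in> borel_measurable borel"
  unfolding ricean_def by (intro borel_measurable_continuous_onI continuous_intros)

abbreviation h :: "nat \<Rightarrow> nat \<Rightarrow> 'a \<Rightarrow> complex" where
  "h n l \<omega> \<equiv> ricean K (hdf n l \<omega>)"

lemma h_integrable: "integrable M (h n l)"
  unfolding ricean_eq using hdf_mean by auto

lemma h_expectation: "expectation (h n l) = los_amp"
  unfolding ricean_eq using hdf_mean by (simp add: prob_space)

lemma h_power_integrable: "integrable M (\<lambda>\<omega>. (cmod (h n l \<omega>))\<^sup>2)"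
  unfolding ricean_norm2 using hdf_mean hdf_power by auto

lemma h_power_expectation: "expectation (\<lambda>\<omega>. (cmod (h n l \<omega>))\<^sup>2) = 1"
  unfolding ricean_norm2 using hdf_mean[of n l] hdf_power[of n l] los_amp_diff_amp_sq(1)
  by (simp add: prob_space)

lemma h_row_mean_vanishes: "vanishes_in_prob M (\<lambda>L \<omega>. cmod ((\<Sum>l<L. h n l \<omega>) / L - los_amp))"
proof (rule weak_law_pairwise_indep_complex[where C = 1])
  show "indep_var borel (h n l) borel (h n k)" if "l \<noteq> k" for l k
    using indep_var_entries[of n l n k "ricean K" "ricean K"] that by simp
qed (simp_all add: h_power_integrable h_power_expectation h_integrable h_expectation)

lemma h_cross_moments:
  assumes "(n, l) \<noteq> (j, l')"
  shows "integrable M (\<lambda>\<omega>. h n l \<omega> * cnj (h j l' \<omega>))"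
    and "expectation (\<lambda>\<omega>. h n l \<omega> * cnj (h j l' \<omega>)) = los_amp\<^sup>2"
    and "integrable M (\<lambda>\<omega>. (cmod (h n l \<omega> * cnj (h j l' \<omega>)))\<^sup>2)"
    and "expectation (\<lambda>\<omega>. (cmod (h n l \<omega> * cnj (h j l' \<omega>)))\<^sup>2) = 1"
proof -
  have ind: "indep_var borel (h n l) borel (\<lambda>\<omega>. cnj (h j l' \<omega>))"
    using indep_var_entries[OF assms, of "ricean K" "\<lambda>x. cnj (ricean K x)"] by simp
  have cnj_int: "integrable M (\<lambda>\<omega>. cnj (h j l' \<omega>))"
    using h_integrable by simp
  show "integrable M (\<lambda>\<omega>. h n l \<omega> * cnj (h j l' \<omega>))"
    by (rule indep_var_integrable[OF ind h_integrable cnj_int])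
  show "expectation (\<lambda>\<omega>. h n l \<omega> * cnj (h j l' \<omega>)) = los_amp\<^sup>2"
    using indep_var_lebesgue_integral[OF ind h_integrable cnj_int] h_expectation
    by (simp add: power2_eq_square)
  have ind2: "indep_var borel (\<lambda>\<omega>. (cmod (h n l \<omega>))\<^sup>2) borel (\<lambda>\<omega>. (cmod (h j l' \<omega>))\<^sup>2)"
    using indep_var_entries[OF assms, of "\<lambda>x. (cmod (ricean K x))\<^sup>2" "\<lambda>x. (cmod (ricean K x))\<^sup>2"]
    by simp
  have split: "(cmod (h n l \<omega> * cnj (h j l' \<omega>)))\<^sup>2 = (cmod (h n l \<omega>))\<^sup>2 * (cmod (h j l' \<omega>))\<^sup>2" for \<omega>
    by (simp add: norm_mult power_mult_distrib)
  show "integrable M (\<lambda>\<omega>. (cmod (h n l \<omega> * cnj (h j l' \<omega>)))\<^sup>2)"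
    unfolding split by (rule indep_var_integrable[OF ind2 h_power_integrable h_power_integrable])
  show "expectation (\<lambda>\<omega>. (cmod (h n l \<omega> * cnj (h j l' \<omega>)))\<^sup>2) = 1"
    unfolding split
    using indep_var_lebesgue_integral[OF ind2 h_power_integrable h_power_integrable] h_power_expectation
    by simp
qed

lemma h_gram_offdiag_vanishes:
  assumes "n \<noteq> j"
  shows "vanishes_in_prob M (\<lambda>L \<omega>. cmod ((\<Sum>l<L. h n l \<omega> * cnj (h j l \<omega>)) / L - los_amp\<^sup>2))"
proof (rule weak_law_pairwise_indep_complex[where C = 1])
  show "indep_var borel (\<lambda>\<omega>. h n l \<omega> * cnj (h j l \<omega>)) borel (\<lambda>\<omega>. h n k \<omega> * cnj (h j k \<omega>))"
    if "l \<noteq> k" for l k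
    using indep_var_entry_pairs[OF that assms, of "\<lambda>a b. ricean K a * cnj (ricean K b)"] by simp
qed (use h_cross_moments assms in auto)

text \<open>The diagonal Gram entries are sample means of \<open>|h|\<^sup>2\<close>, which need not have a variance;
  their lower tail is controlled through the truncations \<open>min |h|\<^sup>2 T\<close>.\<close>

definition trunc_power_mean :: "real \<Rightarrow> real" where
  "trunc_power_mean T = expectation (\<lambda>\<omega>. min ((cmod (h 0 0 \<omega>))\<^sup>2) T)"

lemma expectation_trunc_power: "expectation (\<lambda>\<omega>. min ((cmod (h n l \<omega>))\<^sup>2) T) = trunc_power_mean T"
proof -
  have "expectation (\<lambda>\<omega>. min ((cmod (h n l \<omega>))\<^sup>2) T)
      = integral\<^sup>L (distr M borel (hdf n l)) (\<lambda>x. min ((cmod (ricean K x))\<^sup>2) T)"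
    by (subst integral_distr) auto
  also have "\<dots> = integral\<^sup>L (distr M borel (hdf 0 0)) (\<lambda>x. min ((cmod (ricean K x))\<^sup>2) T)"
    by (simp only: hdf_distr[of n l])
  also have "\<dots> = trunc_power_mean T"
    unfolding trunc_power_mean_def by (subst integral_distr) auto
  finally show ?thesis .
qed

lemma trunc_power_mean_tendsto: "(\<lambda>i. trunc_power_mean (real i)) \<longlonglongrightarrow> 1"
proof -
  have "(\<lambda>i. expectation (\<lambda>\<omega>. min ((cmod (h 0 0 \<omega>))\<^sup>2) (real i)))
      \<longlonglongrightarrow> expectation (\<lambda>\<omega>. (cmod (h 0 0 \<omega>))\<^sup>2)"
  proof (rule integral_dominated_convergence[where w = "\<lambda>\<omega>. (cmod (h 0 0 \<omega>))\<^sup>2"])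
    show "AE \<omega> in M. (\<lambda>i. min ((cmod (h 0 0 \<omega>))\<^sup>2) (real i)) \<longlonglongrightarrow> (cmod (h 0 0 \<omega>))\<^sup>2"
    proof (rule AE_I2)
      fix \<omega>
      obtain i0 :: nat where "(cmod (h 0 0 \<omega>))\<^sup>2 \<le> real i0"
        using real_arch_simple by blast
      then have "eventually (\<lambda>i. min ((cmod (h 0 0 \<omega>))\<^sup>2) (real i) = (cmod (h 0 0 \<omega>))\<^sup>2) sequentially"
        unfolding eventually_sequentially by (intro exI[of _ i0]) auto
      then show "(\<lambda>i. min ((cmod (h 0 0 \<omega>))\<^sup>2) (real i)) \<longlonglongrightarrow> (cmod (h 0 0 \<omega>))\<^sup>2"
        by (rule tendsto_eventually)
    qed
  qed (auto simp: h_power_integrable)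
  then show ?thesis
    using h_power_expectation by (simp add: trunc_power_mean_def)
qed

lemma trunc_power_mean_gt:
  assumes "\<delta> > 0"
  obtains T where "T > 0" "trunc_power_mean T > 1 - \<delta>"
proof -
  have "eventually (\<lambda>i. trunc_power_mean (real i) > 1 - \<delta> \<and> i \<ge> 1) sequentially"
    using order_tendstoD(1)[OF trunc_power_mean_tendsto] assms eventually_ge_at_top[of 1]
    by (auto intro: eventually_conj)
  then obtain i where "trunc_power_mean (real i) > 1 - \<delta>" "i \<ge> 1"
    by (auto dest: eventually_happens)
  with that[of "real i"] show thesis
    by simp
qed

lemma trunc_power_sample_mean_vanishes:
  assumes T: "T > 0"
  shows "vanishes_in_prob M (\<lambda>L \<omega>. \<bar>(\<Sum>l<L. min ((cmod (h n l \<omega>))\<^sup>2) T) / L - trunc_power_mean T\<bar>)"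
proof (rule weak_law_pairwise_indep[where C = "T\<^sup>2"])
  have bound: "norm ((min ((cmod (h n l \<omega>))\<^sup>2) T)\<^sup>2) \<le> norm (T\<^sup>2)" for l \<omega>
    using T by (auto simp: min_def abs_le_square_iff power_mono)
  show sq_int: "integrable M (\<lambda>\<omega>. (min ((cmod (h n l \<omega>))\<^sup>2) T)\<^sup>2)" for l
    by (rule Bochner_Integration.integrable_bound[of _ "\<lambda>_. T\<^sup>2"]) (use bound in auto)
  show "expectation (\<lambda>\<omega>. (min ((cmod (h n l \<omega>))\<^sup>2) T)\<^sup>2) \<le> T\<^sup>2" for l
  proof -
    have "expectation (\<lambda>\<omega>. (min ((cmod (h n l \<omega>))\<^sup>2) T)\<^sup>2) \<le> expectation (\<lambda>\<omega>. T\<^sup>2)"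
      by (rule integral_mono[OF sq_int]) (use bound in auto)
    then show ?thesis
      by (simp add: prob_space)
  qed
  show "expectation (\<lambda>\<omega>. min ((cmod (h n l \<omega>))\<^sup>2) T) = trunc_power_mean T" for l
    by (rule expectation_trunc_power)
  show "indep_var borel (\<lambda>\<omega>. min ((cmod (h n l \<omega>))\<^sup>2) T) borel (\<lambda>\<omega>. min ((cmod (h n k \<omega>))\<^sup>2) T)"
    if "l \<noteq> k" for l k
    using indep_var_entries[of n l n k "\<lambda>x. min ((cmod (ricean K x))\<^sup>2) T" "\<lambda>x. min ((cmod (ricean K x))\<^sup>2) T"]
      that by simp
qed simp

lemma h_power_sample_mean_vanishes:
  "vanishes_in_prob M (\<lambda>L \<omega>. \<bar>(\<Sum>l<L. (cmod (h n l \<omega>))\<^sup>2) / L - 1\<bar>)"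
proof (rule vanishes_in_prob_of_mean_one)
  show "integrable M (\<lambda>\<omega>. (\<Sum>l<L. (cmod (h n l \<omega>))\<^sup>2) / L)" for L
    using h_power_integrable by auto
  show "eventually (\<lambda>L. expectation (\<lambda>\<omega>. (\<Sum>l<L. (cmod (h n l \<omega>))\<^sup>2) / L) = 1) sequentially"
    using eventually_gt_at_top[of 0]
    by eventually_elim (simp add: h_power_integrable h_power_expectation Bochner_Integration.integral_sum)
next
  fix \<delta> :: real assume "\<delta> > 0"
  then obtain T where T: "T > 0" "trunc_power_mean T > 1 - \<delta> / 2"
    using trunc_power_mean_gt[of "\<delta> / 2"] by auto
  define trunc_dev where
    "trunc_dev L \<omega> = \<bar>(\<Sum>l<L. min ((cmod (h n l \<omega>))\<^sup>2) T) / L - trunc_power_mean T\<bar>" for L \<omega>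
  have trunc: "vanishes_in_prob M trunc_dev"
    unfolding trunc_dev_def[abs_def] using T(1) by (rule trunc_power_sample_mean_vanishes)
  have sub: "{\<omega> \<in> space M. (\<Sum>l<L. (cmod (h n l \<omega>))\<^sup>2) / L < 1 - \<delta>}
      \<subseteq> {\<omega> \<in> space M. trunc_dev L \<omega> > \<delta> / 2}" for L
  proof safe
    fix \<omega> assume "\<omega> \<in> space M" and lt: "(\<Sum>l<L. (cmod (h n l \<omega>))\<^sup>2) / L < 1 - \<delta>"
    have "(\<Sum>l<L. min ((cmod (h n l \<omega>))\<^sup>2) T) / L \<le> (\<Sum>l<L. (cmod (h n l \<omega>))\<^sup>2) / L"
      by (intro divide_right_mono sum_mono) auto
    with lt T(2) show "trunc_dev L \<omega> > \<delta> / 2"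
      unfolding trunc_dev_def by linarith
  qed
  from \<open>\<delta> > 0\<close> have "\<delta> / 2 > 0"
    by simp
  show "(\<lambda>L. prob {\<omega> \<in> space M. (\<Sum>l<L. (cmod (h n l \<omega>))\<^sup>2) / L < 1 - \<delta>}) \<longlonglongrightarrow> 0"
    by (rule prob_tendsto_zero_subset[OF vanishes_in_prob_tail[OF trunc \<open>\<delta> / 2 > 0\<close>]
          vanishes_in_prob_tail_events[OF trunc] always_eventually]) (use sub in blast)
qed (auto intro!: sum_nonneg divide_nonneg_nonneg)

lemma h_gram_vanishes:
  "vanishes_in_prob M (\<lambda>L \<omega>. cmod ((\<Sum>l<L. h n l \<omega> * cnj (h j l \<omega>)) / L
      - (los_amp\<^sup>2 + (if n = j then diff_amp\<^sup>2 else 0))))"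
proof (cases "n = j")
  case False
  then show ?thesis
    using h_gram_offdiag_vanishes[OF False] by simp
next
  case True
  have "(\<Sum>l<L. h n l \<omega> * cnj (h n l \<omega>)) / L - (los_amp\<^sup>2 + diff_amp\<^sup>2)
      = complex_of_real ((\<Sum>l<L. (cmod (h n l \<omega>))\<^sup>2) / L - 1)" for L \<omega>
    using los_amp_diff_amp_sq(1) by (simp add: complex_norm_square del: of_real_power)
  with True h_power_sample_mean_vanishes[of n] show ?thesis
    by (simp del: of_real_diff)
qed

text \<open>The limit of the normalised quadratic form is \<open>\<langle>\<mu>\<one>, (\<alpha> J + \<gamma> I)\<^sup>-\<^sup>1 \<mu>\<one>\<rangle> = \<mu>\<^sup>2 N / (\<alpha> N + \<gamma>)\<close>,
  since \<open>\<one>\<close> is an eigenvector of \<open>J\<close>; here \<open>\<mu> = \<surd>P m\<close>, \<open>\<alpha> = \<sigma>\<^sub>\<eta>\<^sup>2 P m\<^sup>2\<close>, \<open>\<gamma> = \<sigma>\<^sub>\<eta>\<^sup>2 P c\<^sup>2 + \<sigma>\<^sub>\<nu>\<^sup>2\<close>.\<close>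

lemma nocsis_exponent_eq_limit:
  assumes P: "P > 0"
  shows "nocsis_exponent \<theta> s1 s2 P N K = \<theta>\<^sup>2 / 8 * (sqrt P * los_amp
      * (sqrt P * los_amp / (s1 * P * los_amp\<^sup>2 * N + (s1 * P * diff_amp\<^sup>2 + s2))) * N)"
proof -
  have "sqrt P * los_amp * (sqrt P * los_amp / (s1 * P * los_amp\<^sup>2 * N + (s1 * P * diff_amp\<^sup>2 + s2))) * N
      = P * los_amp\<^sup>2 * N / (s1 * P * los_amp\<^sup>2 * N + (s1 * P * diff_amp\<^sup>2 + s2))"
    using P by (simp add: power2_eq_square)
  also have "\<dots> = (P * K * N / (K + 1)) / ((s1 * P * (K * N + 1) + s2 * (K + 1)) / (K + 1))"
  proof -
    have "s1 * P * (K / (K + 1)) * N + (s1 * P * (1 / (K + 1)) + s2)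
        = (s1 * P * (K * N + 1) + s2 * (K + 1)) / (K + 1)"
      using K_nonneg by (simp add: field_simps add_nonneg_eq_0_iff)
    then show ?thesis
      unfolding los_amp_diff_amp_sq(2,3) by simp
  qed
  also have "\<dots> = P * K * N / (s1 * P * (K * N + 1) + s2 * (K + 1))"
    using K_nonneg by simp
  finally show ?thesis
    by (simp add: nocsis_exponent_def)
qed

lemma exp_stat_deviation_le:
  fixes P s1 s2 \<theta> \<mu> \<alpha> \<gamma> \<beta> \<Delta> :: real and N L :: nat and \<omega> :: 'a
  assumes P: "P > 0" and s1: "s1 > 0" and s2: "s2 > 0" and L: "L > 0"
  defines "\<mu> \<equiv> sqrt P * los_amp" and "\<alpha> \<equiv> s1 * P * los_amp\<^sup>2" and "\<gamma> \<equiv> s1 * P * diff_amp\<^sup>2 + s2"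
  defines "\<beta> \<equiv> \<mu> / (\<alpha> * N + \<gamma>)"
  defines "\<Delta> \<equiv> sqrt P * (\<Sum>n<N. cmod ((\<Sum>l<L. h n l \<omega>) / L - los_amp))
    + s1 * P * (\<Sum>n<N. \<Sum>j<N. cmod ((\<Sum>l<L. h n l \<omega> * cnj (h j l \<omega>)) / L
        - (los_amp\<^sup>2 + (if n = j then diff_amp\<^sup>2 else 0))))"
  shows "\<bar>exp_stat \<theta> s1 s2 L (Hmat N L K (\<lambda>n l. hdf n l \<omega>)) (alpha_nocsis P L) - \<theta>\<^sup>2 / 8 * (\<mu> * \<beta> * N)\<bar>
    \<le> \<theta>\<^sup>2 / 8 * (\<Delta> * \<bar>\<beta>\<bar> + (N * \<bar>\<mu>\<bar> + \<Delta>) * ((1 + \<bar>\<beta>\<bar>) * \<Delta>) / s2)"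
proof -
  define f where "f n l = hdf n l \<omega>" for n l
  define u where "u n = complex_of_real (sqrt P / L) * (\<Sum>l\<in>{0..<L}. ricean K (f n l))" for n
  let ?Rf = "cov_entry s1 s2 (P / L) L (\<lambda>n l. ricean K (f n l))"
  obtain Z where Z: "\<And>n. n < N \<Longrightarrow> (\<Sum>j\<in>{0..<N}. ?Rf n j * Z j) = u n"
    and quad: "quad_stat s1 s2 (Hmat N L K f) (alpha_nocsis P L) / L = Re (\<Sum>n\<in>{0..<N}. cnj (u n) * Z n)"
    using quad_stat_nocsis_as_solution[OF L less_imp_le[OF P] less_imp_le[OF s1] s2, where f = f and N = N]
    unfolding u_def by blast
  have L_pos: "real L > 0"
    using L by simp
  have "\<alpha> * N + \<gamma> > 0"
    unfolding \<alpha>_def \<gamma>_def using P s1 s2 by (intro add_nonneg_pos) auto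
  then have beta: "(\<alpha> * N + \<gamma>) * \<beta> = \<mu>"
    unfolding \<beta>_def by simp
  have u_dev: "cmod (u n - \<mu>) = sqrt P * cmod ((\<Sum>l<L. h n l \<omega>) / L - los_amp)" for n
  proof -
    have "u n - \<mu> = complex_of_real (sqrt P) * ((\<Sum>l<L. h n l \<omega>) / L - los_amp)"
      unfolding u_def \<mu>_def f_def using L_pos by (simp add: atLeast0LessThan field_simps)
    then show ?thesis
      using P by (simp add: norm_mult)
  qed
  have R_dev: "cmod (?Rf n j - (\<alpha> + (if n = j then \<gamma> else 0)))
      = s1 * P * cmod ((\<Sum>l<L. h n l \<omega> * cnj (h j l \<omega>)) / L - (los_amp\<^sup>2 + (if n = j then diff_amp\<^sup>2 else 0)))"
    for n j
  proof -
    have "?Rf n j - (\<alpha> + (if n = j then \<gamma> else 0)) = complex_of_real (s1 * P)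
        * ((\<Sum>l<L. h n l \<omega> * cnj (h j l \<omega>)) / L - (los_amp\<^sup>2 + (if n = j then diff_amp\<^sup>2 else 0)))"
      unfolding cov_entry_def \<alpha>_def \<gamma>_def f_def using L_pos by (auto simp: atLeast0LessThan field_simps)
    then show ?thesis
      using s1 P by (simp add: norm_mult)
  qed
  have delta: "\<Delta> = (\<Sum>n\<in>{0..<N}. cmod (u n - \<mu>))
      + (\<Sum>n\<in>{0..<N}. \<Sum>j\<in>{0..<N}. cmod (?Rf n j - (\<alpha> + (if n = j then \<gamma> else 0))))"
    unfolding \<Delta>_def u_dev R_dev by (simp add: atLeast0LessThan sum_distrib_left)
  have coercive: "s2 * (\<Sum>n\<in>{0..<N}. (cmod (y n))\<^sup>2)
      \<le> Re (\<Sum>n\<in>{0..<N}. cnj (y n) * (\<Sum>j\<in>{0..<N}. ?Rf n j * y j))" for y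
    using s1 P by (intro cov_entry_coercive) auto
  define q where "q = Re (\<Sum>n\<in>{0..<N}. cnj (u n) * Z n)"
  have stat: "exp_stat \<theta> s1 s2 L (Hmat N L K (\<lambda>n l. hdf n l \<omega>)) (alpha_nocsis P L) = \<theta>\<^sup>2 / 8 * q"
    unfolding exp_stat_def f_def[abs_def, symmetric] q_def quad[symmetric] by simp
  have "\<bar>exp_stat \<theta> s1 s2 L (Hmat N L K (\<lambda>n l. hdf n l \<omega>)) (alpha_nocsis P L) - \<theta>\<^sup>2 / 8 * (\<mu> * \<beta> * N)\<bar>
      = \<bar>\<theta>\<^sup>2 / 8 * (q - \<mu> * \<beta> * N)\<bar>"
    unfolding stat right_diff_distrib ..
  also have "\<dots> = \<theta>\<^sup>2 / 8 * \<bar>q - \<mu> * \<beta> * N\<bar>"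
    by (simp add: abs_mult)
  also have "\<dots> \<le> \<theta>\<^sup>2 / 8 * (\<Delta> * \<bar>\<beta>\<bar> + (N * \<bar>\<mu>\<bar> + \<Delta>) * ((1 + \<bar>\<beta>\<bar>) * \<Delta>) / s2)"
    using coercive_quadratic_form_perturbation[OF s2 coercive Z beta delta] unfolding q_def[symmetric]
    by (intro mult_left_mono) auto
  finally show ?thesis .
qed

lemma exp_stat_conv_in_prob:
  fixes P s1 s2 \<theta> :: real and N :: nat
  assumes P: "P > 0" and s1: "s1 > 0" and s2: "s2 > 0"
  shows "conv_in_prob M (\<lambda>L \<omega>. exp_stat \<theta> s1 s2 L (Hmat N L K (\<lambda>n l. hdf n l \<omega>)) (alpha_nocsis P L))
    (nocsis_exponent \<theta> s1 s2 P N K)"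
proof -
  define \<mu> where "\<mu> = sqrt P * los_amp"
  define \<beta> where "\<beta> = \<mu> / (s1 * P * los_amp\<^sup>2 * N + (s1 * P * diff_amp\<^sup>2 + s2))"
  define \<Delta> where "\<Delta> L \<omega> = sqrt P * (\<Sum>n<N. cmod ((\<Sum>l<L. h n l \<omega>) / L - los_amp))
    + s1 * P * (\<Sum>n<N. \<Sum>j<N. cmod ((\<Sum>l<L. h n l \<omega> * cnj (h j l \<omega>)) / L
        - (los_amp\<^sup>2 + (if n = j then diff_amp\<^sup>2 else 0))))" for L \<omega>
  define A where "A = \<theta>\<^sup>2 / 8 * (\<bar>\<beta>\<bar> + N * \<bar>\<mu>\<bar> * (1 + \<bar>\<beta>\<bar>) / s2)"
  define B where "B = \<theta>\<^sup>2 / 8 * ((1 + \<bar>\<beta>\<bar>) / s2)"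
  have exponent: "\<theta>\<^sup>2 / 8 * (\<mu> * \<beta> * N) = nocsis_exponent \<theta> s1 s2 P N K"
    unfolding \<mu>_def \<beta>_def using P by (rule nocsis_exponent_eq_limit[symmetric])
  have \<Delta>_nonneg: "\<Delta> L \<omega> \<ge> 0" for L \<omega>
    unfolding \<Delta>_def using P s1 by (auto intro!: add_nonneg_nonneg mult_nonneg_nonneg sum_nonneg)
  have \<Delta>_vanishes: "vanishes_in_prob M \<Delta>"
    unfolding \<Delta>_def[abs_def] using P s1
    by (intro vanishes_in_prob_add vanishes_in_prob_cmult vanishes_in_prob_sum finite_lessThan
        h_row_mean_vanishes h_gram_vanishes) auto
  have "vanishes_in_prob M (\<lambda>L \<omega>. A * \<Delta> L \<omega> + B * (\<Delta> L \<omega>)\<^sup>2)"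
    using s2 \<Delta>_nonneg
    by (intro vanishes_in_prob_add vanishes_in_prob_cmult vanishes_in_prob_power2 \<Delta>_vanishes)
      (auto simp: A_def B_def)
  moreover have "\<bar>exp_stat \<theta> s1 s2 L (Hmat N L K (\<lambda>n l. hdf n l \<omega>)) (alpha_nocsis P L)
      - \<theta>\<^sup>2 / 8 * (\<mu> * \<beta> * N)\<bar> \<le> A * \<Delta> L \<omega> + B * (\<Delta> L \<omega>)\<^sup>2" if "L > 0" for L \<omega>
  proof -
    have "\<theta>\<^sup>2 / 8 * (\<Delta> L \<omega> * \<bar>\<beta>\<bar> + (N * \<bar>\<mu>\<bar> + \<Delta> L \<omega>) * ((1 + \<bar>\<beta>\<bar>) * \<Delta> L \<omega>) / s2)
        = A * \<Delta> L \<omega> + B * (\<Delta> L \<omega>)\<^sup>2"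
      unfolding A_def B_def using s2 by (simp add: field_simps power2_eq_square)
    with exp_stat_deviation_le[OF P s1 s2 that, of \<theta> N \<omega>] show ?thesis
      unfolding \<mu>_def[symmetric] \<beta>_def[symmetric] \<Delta>_def[symmetric] by simp
  qed
  ultimately show ?thesis
    unfolding exponent[symmetric] by (rule conv_in_prob_if_deviation_le)
qed

end

lemma nocsis_antenna_gain_tendsto:
  assumes "\<theta> > 0" "P > 0" "s1 > 0" "s2 > 0"
  shows "((\<lambda>K. nocsis_exponent \<theta> s1 s2 P N K / nocsis_exponent \<theta> s1 s2 P 1 K) \<longlongrightarrow> real N) (at_right 0)"
proof -
  define D where "D n K = s1 * P * (K * n + 1) + s2 * (K + 1)" for n K :: real
  have D_pos: "D n K > 0" if "n \<ge> 0" "K \<ge> 0" for n K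
    unfolding D_def using assms that by (intro add_pos_pos mult_pos_pos add_nonneg_pos mult_nonneg_nonneg) auto
  have "((\<lambda>K. real N * D 1 K / D (real N) K) \<longlongrightarrow> real N * D 1 0 / D (real N) 0) (at_right 0)"
    using D_pos[of "real N" 0] unfolding D_def by (intro tendsto_intros) auto
  moreover have "D 1 0 = D (real N) 0" "D (real N) 0 > 0"
    using D_pos[of "real N" 0] by (simp_all add: D_def)
  ultimately have "((\<lambda>K. real N * D 1 K / D (real N) K) \<longlongrightarrow> real N) (at_right 0)"
    by simp
  moreover have "eventually (\<lambda>K. real N * D 1 K / D (real N) K
      = nocsis_exponent \<theta> s1 s2 P N K / nocsis_exponent \<theta> s1 s2 P 1 K) (at_right 0)"
    using eventually_at_right_less[of 0]
  proof eventually_elim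
    case (elim K)
    define c where "c = \<theta>\<^sup>2 / 8 * (P * K)"
    have "c \<noteq> 0"
      using elim assms by (simp add: c_def)
    moreover have "nocsis_exponent \<theta> s1 s2 P n K = c * (n / D n K)" for n
      by (simp add: nocsis_exponent_def D_def c_def)
    ultimately show ?case
      using D_pos[of 1 K] D_pos[of "real N" K] elim by (simp add: field_simps)
  qed
  ultimately show ?thesis
    by (rule Lim_transform_eventually)
qed

theorem theorem1:
  fixes M :: "'a measure"
    and hdf :: "nat \<Rightarrow> nat \<Rightarrow> 'a \<Rightarrow> complex"
    and \<theta> p1 s_eta2 s_nu2 P_T :: real
  assumes "prob_space M"
    and meas: "\<And>n l. hdf n l \<in> borel_measurable M"
    and indep: "prob_space.indep_vars M (\<lambda>_. borel) (\<lambda>(n, l). hdf n l) UNIV"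
    and ident: "\<And>n l. distr M borel (hdf n l) = distr M borel (hdf 0 0)"
    and zero_mean: "\<And>n l. integrable M (hdf n l) \<and> integral\<^sup>L M (hdf n l) = 0"
    and unit_power: "\<And>n l. integrable M (\<lambda>\<omega>. (cmod (hdf n l \<omega>))\<^sup>2)
                         \<and> integral\<^sup>L M (\<lambda>\<omega>. (cmod (hdf n l \<omega>))\<^sup>2) = 1"
    and "\<theta> > 0" and "0 < p1" and "p1 < 1"
    and "s_eta2 > 0" and "s_nu2 > 0" and "P_T > 0"
  shows "let P = P_T / (p1 * \<theta>\<^sup>2 + s_eta2) in
    \<exists>E :: nat \<Rightarrow> real \<Rightarrow> real.
      (\<forall>N \<ge> 1. \<forall>K \<ge> 0.
         conv_in_prob M
           (\<lambda>L \<omega>. exp_stat \<theta> s_eta2 s_nu2 L (Hmat N L K (\<lambda>n l. hdf n l \<omega>)) (alpha_nocsis P L))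
           (E N K))
    \<and> (\<forall>N \<ge> 1. E N 0 = 0)
    \<and> (\<forall>N \<ge> 1. ((\<lambda>K. E N K / E 1 K) \<longlongrightarrow> real N) (at_right 0))"
proof -
  define P where "P = P_T / (p1 * \<theta>\<^sup>2 + s_eta2)"
  have P: "P > 0"
    unfolding P_def using assms by (intro divide_pos_pos add_nonneg_pos) auto
  have "ricean_channels M hdf K" if "K \<ge> 0" for K
    unfolding ricean_channels_def ricean_channels_axioms_def using assms that by auto
  then have "conv_in_prob M
      (\<lambda>L \<omega>. exp_stat \<theta> s_eta2 s_nu2 L (Hmat N L K (\<lambda>n l. hdf n l \<omega>)) (alpha_nocsis P L))
      (nocsis_exponent \<theta> s_eta2 s_nu2 P N K)" if "K \<ge> 0" for N K
    using ricean_channels.exp_stat_conv_in_prob P \<open>s_eta2 > 0\<close> \<open>s_nu2 > 0\<close> that by blast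
  moreover have "nocsis_exponent \<theta> s_eta2 s_nu2 P N 0 = 0" for N
    by (simp add: nocsis_exponent_def)
  moreover note nocsis_antenna_gain_tendsto[OF \<open>\<theta> > 0\<close> P \<open>s_eta2 > 0\<close> \<open>s_nu2 > 0\<close>]
  ultimately show ?thesis
    unfolding Let_def P_def[symmetric] by blast
qed

end
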